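(* Let $\mathcal{N}$ be a net of quadrics in $\mathbb{P}^3$ whose discriminant quartic satisfies $\Delta(\mathcal{N})\subsetneq\mathbb{P}^2$. Then: (1) if $\Delta(\mathcal{N})$ is reduced and GIT unstable, then either it has a singular point of multiplicity at least three, or it consists of a cubic and an inflectional tangent line; (2) if $\Delta(\mathcal{N})$ is GIT unstable and not reduced, then it is not a double smooth conic. In particular, if $\Delta(\mathcal{N})$ is GIT semistable, then so is $\mathcal{N}$.
   Context: $\Delta(\mathcal{N})\subset|\mathcal{N}|\cong\mathbb{P}^2$ is the subscheme defined by $\det(\lambda A_1+\mu A_2+\nu A_3)=0$, where $A_1,A_2,A_3$ are symmetric $4\times4$ matrices representing three generators of $\mathcal{N}$. GIT stability of plane quartics refers to the $\mathrm{SL}(3)$-action on $\mathbb{P}(H^0(\mathbb{P}^2,\mathcal{O}(4)))$; GIT stability of $\mathcal{N}$ refers to the $\mathrm{SL}(4)$-action on the Plücker-embedded Grassmannian of nets of quadrics in $\mathbb{P}^3$. *)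

theory Defs
  imports "HOL-Analysis.Analysis" "HOL-Computational_Algebra.Polynomial"
begin

definition cvec :: "complex \<Rightarrow> complex^'n \<Rightarrow> complex^'n" where
  "cvec c v = (\<chi> i. c * v $ i)"

definition cmat :: "complex \<Rightarrow> complex^'n^'m \<Rightarrow> complex^'n^'m" where
  "cmat c A = (\<chi> i j. c * A $ i $ j)"

text \<open>Homogeneous forms of degree d on C^3, represented as polynomial functions
  (the field C is infinite, so functions and polynomials correspond).\<close>
definition ternary_form :: "nat \<Rightarrow> (complex^3 \<Rightarrow> complex) \<Rightarrow> bool" where
  "ternary_form d f \<longleftrightarrow> (\<exists>c :: nat \<Rightarrow> nat \<Rightarrow> complex. \<forall>x.
      f x = (\<Sum>a\<le>d. \<Sum>b\<le>d - a. c a b * x$1 ^ a * x$2 ^ b * x$3 ^ (d - a - b)))"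

text \<open>The point [p] of P^2 (p nonzero) has multiplicity at least m on the curve f = 0:
  along every line through p the restriction of f vanishes to order at least m.\<close>
definition mult_ge :: "(complex^3 \<Rightarrow> complex) \<Rightarrow> complex^3 \<Rightarrow> nat \<Rightarrow> bool" where
  "mult_ge f p m \<longleftrightarrow> (\<forall>x. \<exists>q :: complex poly. \<forall>t. f (p + cvec t x) = t ^ m * poly q t)"

definition reduced_form :: "nat \<Rightarrow> (complex^3 \<Rightarrow> complex) \<Rightarrow> bool" where
  "reduced_form n f \<longleftrightarrow> \<not> (\<exists>d G H. 1 \<le> d \<and> 2 * d \<le> n \<and> ternary_form d G \<and> G \<noteq> (\<lambda>_. 0)
      \<and> ternary_form (n - 2 * d) H \<and> (\<forall>x. f x = (G x)^2 * H x))"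

definition smooth_curve :: "(complex^3 \<Rightarrow> complex) \<Rightarrow> bool" where
  "smooth_curve f \<longleftrightarrow> (\<forall>p. p \<noteq> 0 \<longrightarrow> \<not> mult_ge f p 2)"

definition has_triple_point :: "(complex^3 \<Rightarrow> complex) \<Rightarrow> bool" where
  "has_triple_point f \<longleftrightarrow> (\<exists>p. p \<noteq> 0 \<and> mult_ge f p 3)"

text \<open>The line L = 0 is an inflectional tangent line of the cubic C = 0:
  it meets C only at a smooth point [p] of C, with intersection multiplicity 3.\<close>
definition inflectional_tangent :: "(complex^3 \<Rightarrow> complex) \<Rightarrow> (complex^3 \<Rightarrow> complex) \<Rightarrow> bool" where
  "inflectional_tangent L C \<longleftrightarrow> (\<exists>p q a. (\<forall>a b. cvec a p + cvec b q = 0 \<longrightarrow> a = 0 \<and> b = 0) \<and> L p = 0 \<and> L q = 0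
      \<and> a \<noteq> 0 \<and> (\<forall>s t. C (cvec s p + cvec t q) = a * t ^ 3) \<and> \<not> mult_ge C p 2)"

definition cubic_plus_inflectional_line :: "(complex^3 \<Rightarrow> complex) \<Rightarrow> bool" where
  "cubic_plus_inflectional_line f \<longleftrightarrow> (\<exists>L C. ternary_form 1 L \<and> L \<noteq> (\<lambda>_. 0) \<and> ternary_form 3 C
      \<and> (\<forall>x. f x = L x * C x) \<and> inflectional_tangent L C)"

definition double_smooth_conic :: "(complex^3 \<Rightarrow> complex) \<Rightarrow> bool" where
  "double_smooth_conic f \<longleftrightarrow> (\<exists>Q. ternary_form 2 Q \<and> smooth_curve Q \<and> (\<forall>x. f x = (Q x)^2))"

text \<open>GIT (in)stability of a plane quartic F (nonzero) under SL(3): F is unstable iff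
  0 lies in the closure of its SL(3)-orbit in the space of quartic forms (convergence of
  forms is equivalent to pointwise convergence).\<close>
definition quartic_unstable :: "(complex^3 \<Rightarrow> complex) \<Rightarrow> bool" where
  "quartic_unstable F \<longleftrightarrow> (\<exists>g :: nat \<Rightarrow> complex^3^3. (\<forall>n. det (g n) = 1)
      \<and> (\<forall>x. (\<lambda>n. F (g n *v x)) \<longlonglongrightarrow> 0))"

definition quartic_semistable :: "(complex^3 \<Rightarrow> complex) \<Rightarrow> bool" where
  "quartic_semistable F \<longleftrightarrow> \<not> quartic_unstable F"

definition net_discriminant :: "complex^4^4 \<Rightarrow> complex^4^4 \<Rightarrow> complex^4^4 \<Rightarrow> complex^3 \<Rightarrow> complex" where
  "net_discriminant A1 A2 A3 x = det (cmat (x$1) A1 + cmat (x$2) A2 + cmat (x$3) A3)"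

text \<open>Plucker coordinates of the net: 3x3 minors of the 3 x 10 coefficient matrix
  (columns indexed by entries (i,j); repeated/transposed columns only add duplicates or zeros).\<close>
definition plucker :: "complex^4^4 \<Rightarrow> complex^4^4 \<Rightarrow> complex^4^4
    \<Rightarrow> (4 \<times> 4) \<Rightarrow> (4 \<times> 4) \<Rightarrow> (4 \<times> 4) \<Rightarrow> complex" where
  "plucker A1 A2 A3 e1 e2 e3 =
     (let m = (\<lambda>A (e :: 4 \<times> 4). A $ fst e $ snd e) in
       m A1 e1 * (m A2 e2 * m A3 e3 - m A2 e3 * m A3 e2)
     - m A1 e2 * (m A2 e1 * m A3 e3 - m A2 e3 * m A3 e1)
     + m A1 e3 * (m A2 e1 * m A3 e2 - m A2 e2 * m A3 e1))"

definition quad_act :: "complex^4^4 \<Rightarrow> complex^4^4 \<Rightarrow> complex^4^4" where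
  "quad_act g A = transpose g ** A ** g"

text \<open>GIT instability of the net under SL(4) in the Plucker embedding: 0 lies in the
  closure of the SL(4)-orbit of the Plucker vector.\<close>
definition net_unstable :: "complex^4^4 \<Rightarrow> complex^4^4 \<Rightarrow> complex^4^4 \<Rightarrow> bool" where
  "net_unstable A1 A2 A3 \<longleftrightarrow> (\<exists>g :: nat \<Rightarrow> complex^4^4. (\<forall>n. det (g n) = 1)
      \<and> (\<forall>e1 e2 e3. (\<lambda>n. plucker (quad_act (g n) A1) (quad_act (g n) A2) (quad_act (g n) A3) e1 e2 e3)
            \<longlonglongrightarrow> 0))"

definition net_semistable :: "complex^4^4 \<Rightarrow> complex^4^4 \<Rightarrow> complex^4^4 \<Rightarrow> bool" where
  "net_semistable A1 A2 A3 \<longleftrightarrow> \<not> net_unstable A1 A2 A3"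

end

theory Submission
  imports Defs
begin

text \<open>A destabilising sequence \<open>g\<^sub>n\<close> in \<open>SL(3)\<close> factors, by Gaussian elimination with
  pivoting, as \<open>g\<^sub>n = K\<^sub>n D\<^sub>n H\<^sub>n\<^sup>-\<^sup>1\<close> with \<open>K\<^sub>n\<close>, \<open>H\<^sub>n\<close> bounded and \<open>D\<^sub>n\<close> diagonal. Since the
  coefficients of a form are continuous in its values, passing to a limit of the \<open>K\<^sub>n\<close> gives
  coordinates in which every monomial of the quartic has negative weight for one real weight
  vector of sum zero. Sorting the weights, the possible supports force a triple point or a cubic
  with an inflectional tangent line, and a double smooth conic has neither.

  For the net, a maximal Plucker coordinate and Cramer's rule turn a destabilising sequence of the
  net into substitutions \<open>h\<^sub>n \<in> SL(3)\<close> with \<open>|\<Delta>(h\<^sub>n y)| \<le> 24 (p\<^sub>n\<^sup>1\<^sup>/\<^sup>3 \<parallel>y\<parallel>\<^sub>1)\<^sup>4\<close>, where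
  \<open>p\<^sub>n \<rightarrow> 0\<close> bounds the Plucker coordinates; so an unstable net has an unstable discriminant.\<close>

section \<open>Homogeneous forms on \<open>\<complex>\<^sup>3\<close>\<close>

definition monomial :: "(3 \<Rightarrow> nat) \<Rightarrow> complex^3 \<Rightarrow> complex" where
  "monomial e x = (\<Prod>i\<in>UNIV. x$i ^ e i)"

definition exponents :: "nat \<Rightarrow> (3 \<Rightarrow> nat) set" where
  "exponents d = {e. sum e UNIV = d}"

text \<open>The same notion as \<^const>\<open>ternary_form\<close> (see \<open>ternary_form_iff_homogeneous\<close>), indexed by
  exponent vectors so that products and linear substitutions are easy to handle.\<close>
definition homogeneous :: "nat \<Rightarrow> (complex^3 \<Rightarrow> complex) \<Rightarrow> bool" where
  "homogeneous d f \<longleftrightarrow> (\<exists>c. \<forall>x. f x = (\<Sum>e\<in>exponents d. c e * monomial e x))"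

lemma prod_UNIV_3: "prod f (UNIV::3 set) = f 1 * f 2 * f 3"
  unfolding UNIV_3 by (simp add: mult.assoc)

lemma exponents_le: "e \<in> exponents d \<Longrightarrow> e i \<le> d"
  unfolding exponents_def using member_le_sum[of i UNIV e] by simp

lemma finite_exponents [simp]: "finite (exponents d)"
proof (rule finite_subset)
  show "exponents d \<subseteq> PiE UNIV (\<lambda>_. {..d})"
    using exponents_le by (auto simp: PiE_def extensional_def)
qed (simp add: finite_PiE)

lemma exponents_add: "e \<in> exponents d \<Longrightarrow> e' \<in> exponents d' \<Longrightarrow> (\<lambda>i. e i + e' i) \<in> exponents (d + d')"
  unfolding exponents_def by (simp add: sum.distrib)

lemma exponents_0: "exponents 0 = {\<lambda>_. 0}"
  unfolding exponents_def by (auto simp: fun_eq_iff)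

lemma monomial_add: "monomial (\<lambda>i. e i + e' i) x = monomial e x * monomial e' x"
  unfolding monomial_def by (simp add: power_add prod.distrib)

lemma monomial_scale: "monomial e (\<chi> i. a$i * x$i) = monomial e a * monomial e x"
  unfolding monomial_def by (simp add: power_mult_distrib prod.distrib)

lemma homogeneous_zero: "homogeneous d (\<lambda>_. 0)"
  unfolding homogeneous_def by (rule exI[of _ "\<lambda>_. 0"]) simp

lemma homogeneous_add:
  assumes "homogeneous d f" "homogeneous d g" shows "homogeneous d (\<lambda>x. f x + g x)"
proof -
  obtain c1 c2 where "\<forall>x. f x = (\<Sum>e\<in>exponents d. c1 e * monomial e x)"
    "\<forall>x. g x = (\<Sum>e\<in>exponents d. c2 e * monomial e x)"
    using assms unfolding homogeneous_def by blast
  then show ?thesis unfolding homogeneous_def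
    by (intro exI[of _ "\<lambda>e. c1 e + c2 e"]) (simp add: sum.distrib distrib_right)
qed

lemma homogeneous_cmult:
  assumes "homogeneous d f" shows "homogeneous d (\<lambda>x. k * f x)"
proof -
  obtain c where "\<forall>x. f x = (\<Sum>e\<in>exponents d. c e * monomial e x)"
    using assms unfolding homogeneous_def by blast
  then show ?thesis unfolding homogeneous_def
    by (intro exI[of _ "\<lambda>e. k * c e"]) (simp add: sum_distrib_left mult.assoc)
qed

lemma homogeneous_sum:
  "finite I \<Longrightarrow> (\<And>i. i \<in> I \<Longrightarrow> homogeneous d (f i)) \<Longrightarrow> homogeneous d (\<lambda>x. \<Sum>i\<in>I. f i x)"
  by (induction I rule: finite_induct) (simp_all add: homogeneous_zero homogeneous_add)

lemma homogeneous_one: "homogeneous 0 (\<lambda>_. 1)"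
  unfolding homogeneous_def exponents_0 by (intro exI[of _ "\<lambda>_. 1"]) (simp add: monomial_def)

lemma homogeneous_mult:
  assumes "homogeneous d f" "homogeneous d' g" shows "homogeneous (d + d') (\<lambda>x. f x * g x)"
proof -
  obtain c1 where c1: "\<forall>x. f x = (\<Sum>e\<in>exponents d. c1 e * monomial e x)"
    using assms(1) unfolding homogeneous_def by blast
  obtain c2 where c2: "\<forall>x. g x = (\<Sum>e\<in>exponents d'. c2 e * monomial e x)"
    using assms(2) unfolding homogeneous_def by blast
  define S where "S = exponents d \<times> exponents d'"
  define h where "h = (\<lambda>p::(3\<Rightarrow>nat)\<times>(3\<Rightarrow>nat). (\<lambda>i. fst p i + snd p i))"
  define c where "c = (\<lambda>e. \<Sum>p\<in>{p\<in>S. h p = e}. c1 (fst p) * c2 (snd p))"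
  have hS: "h ` S \<subseteq> exponents (d + d')"
    unfolding S_def h_def using exponents_add by auto
  show ?thesis unfolding homogeneous_def
  proof (intro exI[of _ c] allI)
    fix x
    have "f x * g x = (\<Sum>p\<in>S. c1 (fst p) * c2 (snd p) * monomial (h p) x)"
      unfolding c1[rule_format] c2[rule_format] S_def h_def sum_product sum.cartesian_product
      by (intro sum.cong) (auto simp: monomial_add)
    also have "\<dots> = (\<Sum>e\<in>exponents (d + d'). \<Sum>p\<in>{p\<in>S. h p = e}. c1 (fst p) * c2 (snd p) * monomial (h p) x)"
      by (rule sum.group[symmetric, OF _ _ hS]) (simp_all add: S_def)
    also have "\<dots> = (\<Sum>e\<in>exponents (d + d'). c e * monomial e x)"
      unfolding c_def sum_distrib_right by (intro sum.cong refl) auto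
    finally show "f x * g x = (\<Sum>e\<in>exponents (d + d'). c e * monomial e x)" .
  qed
qed

lemma homogeneous_prod:
  "finite I \<Longrightarrow> (\<And>i. i \<in> I \<Longrightarrow> homogeneous (d i) (f i))
    \<Longrightarrow> homogeneous (\<Sum>i\<in>I. d i) (\<lambda>x. \<Prod>i\<in>I. f i x)"
  by (induction I rule: finite_induct) (simp_all add: homogeneous_one homogeneous_mult)

lemma homogeneous_power: "homogeneous d f \<Longrightarrow> homogeneous (n * d) (\<lambda>x. f x ^ n)"
  by (induction n) (simp_all add: homogeneous_one homogeneous_mult)

lemma homogeneous_coord: "homogeneous 1 (\<lambda>x. x$i)"
proof -
  define u where "u = (\<lambda>j. if j = i then 1 else 0 :: nat)"
  have u: "u \<in> exponents 1" "monomial u x = x$i" for x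
    unfolding u_def exponents_def monomial_def by (simp_all add: if_distrib prod.If_cases)
  have "(\<Sum>e\<in>exponents 1. (if e = u then 1 else 0) * monomial e x) = x$i" for x
  proof -
    have "(\<Sum>e\<in>exponents 1. (if e = u then 1 else 0) * monomial e x)
        = (\<Sum>e\<in>exponents 1. if e = u then monomial e x else 0)"
      by (rule sum.cong) auto
    then show ?thesis using u by simp
  qed
  then show ?thesis
    unfolding homogeneous_def by (intro exI[of _ "\<lambda>e. if e = u then 1 else 0"]) simp
qed

lemma homogeneous_linear: "homogeneous 1 (\<lambda>x. \<Sum>j\<in>UNIV. m j * x$j)"
  by (intro homogeneous_sum homogeneous_cmult homogeneous_coord) simp

lemma homogeneous_monomial: "e \<in> exponents d \<Longrightarrow> homogeneous d (monomial e)"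
  using homogeneous_prod[of UNIV e "\<lambda>i x. x$i ^ e i"] homogeneous_power[OF homogeneous_coord]
  unfolding exponents_def monomial_def[abs_def] by simp

lemma homogeneous_compose_linear:
  assumes "homogeneous d f" shows "homogeneous d (\<lambda>x. f (M *v x))"
proof -
  obtain c where c: "\<forall>x. f x = (\<Sum>e\<in>exponents d. c e * monomial e x)"
    using assms unfolding homogeneous_def by blast
  have "homogeneous d (\<lambda>x. monomial e (M *v x))" if "e \<in> exponents d" for e
    using that homogeneous_prod[of UNIV e "\<lambda>i x. (\<Sum>j\<in>UNIV. M$i$j * x$j) ^ e i"]
      homogeneous_power[OF homogeneous_linear]
    unfolding exponents_def monomial_def by (simp add: matrix_vector_mult_def)
  then show ?thesis
    using homogeneous_sum[of "exponents d" d "\<lambda>e x. c e * monomial e (M *v x)"]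
    by (simp add: c homogeneous_cmult)
qed

lemma homogeneous_tendsto:
  assumes "homogeneous d f" "(y \<longlongrightarrow> y0) F" shows "((\<lambda>n. f (y n)) \<longlongrightarrow> f y0) F"
proof -
  obtain c where c: "\<forall>x. f x = (\<Sum>e\<in>exponents d. c e * monomial e x)"
    using assms unfolding homogeneous_def by blast
  show ?thesis unfolding c[rule_format] monomial_def
    by (intro tendsto_intros tendsto_vec_nth assms(2))
qed

lemma sum_exponents:
  "(\<Sum>e\<in>exponents d. g e) = (\<Sum>a\<le>d. \<Sum>b\<le>d - a. g (\<lambda>i. if i = 1 then a else if i = 2 then b else d - a - b))"
proof -
  define mk where "mk p = (\<lambda>i::3. if i = 1 then fst p else if i = 2 then snd p else d - fst p - snd p)" for p
  have sum3: "e 1 + e 2 + e 3 = d" if "e \<in> exponents d" for e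
    using that unfolding exponents_def by (simp add: sum_3)
  have mk_inv: "mk (e 1, e 2) = e" if "e \<in> exponents d" for e
  proof
    fix i :: 3
    show "mk (e 1, e 2) i = e i" using exhaust_3[of i] sum3[OF that] by (auto simp: mk_def)
  qed
  have "(\<Sum>e\<in>exponents d. g e) = (\<Sum>p\<in>Sigma {..d} (\<lambda>a. {..d - a}). g (mk p))"
  proof (rule sum.reindex_bij_witness[of _ mk "\<lambda>e. (e 1, e 2)"])
    fix p assume "p \<in> Sigma {..d} (\<lambda>a. {..d - a})"
    then show "(mk p 1, mk p 2) = p" "mk p \<in> exponents d"
      by (auto simp: mk_def exponents_def sum_3)
  qed (use mk_inv sum3 in force)+
  then show ?thesis by (simp add: sum.Sigma split_def mk_def)
qed

lemma ternary_form_iff_homogeneous: "ternary_form d f \<longleftrightarrow> homogeneous d f"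
proof -
  have mk: "monomial (\<lambda>i. if i = 1 then a else if i = 2 then b else l) x = x$1^a * x$2^b * x$3^l"
    for a b l and x :: "complex^3"
    unfolding monomial_def prod_UNIV_3 by simp
  show ?thesis
  proof
    assume "ternary_form d f"
    then obtain c where c: "\<forall>x. f x = (\<Sum>a\<le>d. \<Sum>b\<le>d - a. c a b * x$1 ^ a * x$2 ^ b * x$3 ^ (d - a - b))"
      unfolding ternary_form_def by blast
    show "homogeneous d f" unfolding homogeneous_def
      by (intro exI[of _ "\<lambda>e. c (e 1) (e 2)"]) (simp add: c sum_exponents mk mult.assoc)
  next
    assume "homogeneous d f"
    then obtain c where c: "\<forall>x. f x = (\<Sum>e\<in>exponents d. c e * monomial e x)"
      unfolding homogeneous_def by blast
    show "ternary_form d f" unfolding ternary_form_def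
      by (intro exI[of _ "\<lambda>a b. c (\<lambda>i. if i = 1 then a else if i = 2 then b else d - a - b)"])
        (simp add: c sum_exponents mk mult.assoc)
  qed
qed

section \<open>Coefficients of a form as continuous functionals\<close>

definition unit_root :: "nat \<Rightarrow> complex" where
  "unit_root n = exp (2 * of_real pi * \<i> / of_nat n)"

lemma unit_root_power: "unit_root n ^ m = exp (2 * of_real pi * \<i> * of_nat m / of_nat n)"
  unfolding unit_root_def exp_of_nat_mult[symmetric] by (simp add: field_simps)

lemma sum_unit_root_powers:
  assumes "0 < n" shows "(\<Sum>a<n. unit_root n ^ (a * m)) = (if n dvd m then of_nat n else 0)"
proof -
  define z where "z = unit_root n ^ m"
  have z_eq_1: "z = 1 \<longleftrightarrow> n dvd m"
    unfolding z_def unit_root_power using complex_root_unity_eq_1[of n m] assms by simp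
  have "unit_root n ^ n = 1"
    unfolding unit_root_power using complex_root_unity_eq_1[of n n] assms by simp
  then have "z ^ n = 1"
    unfolding z_def by (metis power_mult mult.commute power_one)
  moreover have "unit_root n ^ (a * m) = z ^ a" for a
    unfolding z_def by (simp add: power_mult[symmetric] mult.commute)
  ultimately show ?thesis
    using geometric_sum[of z n] z_eq_1 by (cases "z = 1") simp_all
qed

lemma dvd_add_diff_iff_eq:
  fixes x y d :: nat assumes "x \<le> d" "y \<le> d" shows "Suc d dvd x + (Suc d - y) \<longleftrightarrow> x = y"
proof
  assume dvd: "Suc d dvd x + (Suc d - y)"
  show "x = y"
  proof (rule ccontr)
    assume "x \<noteq> y"
    then consider "x < y" | "y < x" by linarith
    then show False
    proof cases
      case 1
      then show False using dvd assms by (auto dest: dvd_imp_le)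
    next
      case 2
      then have "Suc d dvd x + (Suc d - y) - Suc d" using dvd by (intro dvd_diff_nat) simp_all
      moreover have "x + (Suc d - y) - Suc d = x - y" using 2 assms by simp
      ultimately show False using 2 assms by (auto dest: dvd_imp_le)
    qed
  qed
qed (use assms in simp)

text \<open>Discrete Fourier inversion on the grid of \<open>(d+1)\<close>-st roots of unity \<open>\<zeta>\<close> (with \<open>\<zeta>\<^bsup>d+1-e\<^esub>\<close>
  standing for \<open>\<zeta>\<^bsup>-e\<^esub>\<close>): it recovers the coefficients of a form of degree \<open>d\<close> as a fixed linear
  combination of finitely many values.\<close>
definition form_coeff :: "nat \<Rightarrow> (complex^3 \<Rightarrow> complex) \<Rightarrow> (3 \<Rightarrow> nat) \<Rightarrow> complex" where
  "form_coeff d f e =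
     (\<Sum>k\<in>PiE UNIV (\<lambda>_. {..<Suc d}). f (\<chi> i. unit_root (Suc d) ^ k i)
        * (\<Prod>i\<in>UNIV. unit_root (Suc d) ^ (k i * (Suc d - e i)))) / of_nat (Suc d) ^ 3"

lemma form_coeff_eq:
  assumes f: "\<And>x. f x = (\<Sum>e'\<in>exponents d. c e' * monomial e' x)" and e: "e \<in> exponents d"
  shows "form_coeff d f e = c e"
proof -
  define \<zeta> where "\<zeta> = unit_root (Suc d)"
  define G where "G = PiE (UNIV :: 3 set) (\<lambda>_. {..<Suc d})"
  define pt where "pt k = (\<chi> i. \<zeta> ^ k i)" for k :: "3 \<Rightarrow> nat"
  define W where "W k = (\<Prod>i\<in>UNIV. \<zeta> ^ (k i * (Suc d - e i)))" for k :: "3 \<Rightarrow> nat"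
  have orth: "(\<Sum>k\<in>G. monomial e' (pt k) * W k) = (if e' = e then of_nat (Suc d) ^ 3 else 0)"
    if e': "e' \<in> exponents d" for e'
  proof -
    have "(\<Sum>k\<in>G. monomial e' (pt k) * W k) = (\<Sum>k\<in>G. \<Prod>i\<in>UNIV. \<zeta> ^ (k i * (e' i + (Suc d - e i))))"
      unfolding monomial_def W_def pt_def
      by (simp add: prod.distrib[symmetric] power_mult[symmetric] power_add[symmetric] distrib_left)
    also have "\<dots> = (\<Prod>i\<in>UNIV. \<Sum>a<Suc d. \<zeta> ^ (a * (e' i + (Suc d - e i))))"
      unfolding G_def by (rule prod_sum_PiE[symmetric]) simp_all
    also have "\<dots> = (\<Prod>i\<in>UNIV. if e' i = e i then of_nat (Suc d) else 0)"
    proof (rule prod.cong[OF refl])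
      fix i
      show "(\<Sum>a<Suc d. \<zeta> ^ (a * (e' i + (Suc d - e i)))) = (if e' i = e i then of_nat (Suc d) else 0)"
        unfolding \<zeta>_def sum_unit_root_powers[OF zero_less_Suc]
          dvd_add_diff_iff_eq[OF exponents_le[OF e'] exponents_le[OF e]] by (rule refl)
    qed
    also have "\<dots> = (if e' = e then of_nat (Suc d) ^ 3 else 0)"
      by (auto simp: fun_eq_iff intro: prod_zero)
    finally show ?thesis .
  qed
  have "(\<Sum>k\<in>G. f (pt k) * W k) = (\<Sum>e'\<in>exponents d. c e' * (\<Sum>k\<in>G. monomial e' (pt k) * W k))"
    unfolding f sum_distrib_right sum_distrib_left by (subst sum.swap) (simp add: mult.assoc)
  also have "\<dots> = c e * of_nat (Suc d) ^ 3"
    using e by (simp add: orth if_distrib sum.delta cong: if_cong)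
  finally show ?thesis
    unfolding form_coeff_def G_def pt_def W_def \<zeta>_def using of_nat_neq_0[of d, where 'a = complex] by simp
qed

lemma homogeneous_eq_form_coeff:
  assumes "homogeneous d f" shows "f x = (\<Sum>e\<in>exponents d. form_coeff d f e * monomial e x)"
proof -
  obtain c where c: "\<forall>x. f x = (\<Sum>e\<in>exponents d. c e * monomial e x)"
    using assms unfolding homogeneous_def by blast
  then show ?thesis using form_coeff_eq[where c = c] by simp
qed

lemma form_coeff_tendsto:
  assumes "\<And>x. ((\<lambda>n. f n x) \<longlongrightarrow> g x) F"
  shows "((\<lambda>n. form_coeff d (f n) e) \<longlongrightarrow> form_coeff d g e) F"
  unfolding form_coeff_def
  by (intro tendsto_intros assms) (use of_nat_neq_0[of d, where 'a = complex] in simp_all)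

lemma form_coeff_zero [simp]: "form_coeff d (\<lambda>_. 0) e = 0"
  unfolding form_coeff_def by simp

section \<open>A bounded LU factorisation of invertible \<open>3\<times>3\<close> matrices\<close>

definition diag_mat :: "complex^3 \<Rightarrow> complex^3^3" where
  "diag_mat d = (\<chi> i j. if i = j then d$i else 0)"

lemma matrix_mul_diag_mat: "K ** diag_mat d = (\<chi> i j. K$i$j * d$j)"
  by (simp add: matrix_matrix_mult_def diag_mat_def vec_eq_iff if_distrib sum.delta' cong: if_cong)

lemma diag_mat_mult_vec: "diag_mat d *v x = (\<chi> i. d$i * x$i)"
proof -
  have "(\<Sum>j\<in>UNIV. (if i = j then d$i else 0) * x$j) = (\<Sum>j\<in>UNIV. if j = i then d$i * x$j else 0)" for i
    by (rule sum.cong) auto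
  then show ?thesis by (simp add: diag_mat_def matrix_vector_mult_def vec_eq_iff)
qed

lemma det_diag_mat: "det (diag_mat d) = d$1 * d$2 * d$3"
  by (simp add: det_diagonal diag_mat_def prod_UNIV_3)

lemma matrix_mul_columns: "g ** (\<chi> i j. w j $ i) = (\<chi> i j. (g *v w j) $ i)"
  by (simp add: matrix_matrix_mult_def matrix_vector_mult_def vec_eq_iff)

lemma matrix_vector_mult_axis: "(g *v axis q 1) $ r = g$r$q"
  by (simp add: matrix_vector_mult_def axis_def if_distrib sum.delta' cong: if_cong)

lemma invertible_mult_vec_eq_0:
  fixes g :: "complex^'n^'n" assumes "det g \<noteq> 0" "g *v x = 0" shows "x = 0"
  by (metis assms invertible_det_nz invertible_left_inverse matrix_left_invertible_ker)

lemma finite_has_max_value: fixes f :: "'a::finite \<Rightarrow> real" shows "\<exists>x. \<forall>y. f y \<le> f x"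
proof -
  have "Max (range f) \<in> range f" by (rule Max_in) auto
  then obtain x where "Max (range f) = f x" by blast
  moreover have "f y \<le> Max (range f)" for y by (rule Max_ge) auto
  ultimately show ?thesis by auto
qed

lemma exists_distinct_3: "\<exists>b c. distinct [a::3, b, c]"
  using exhaust_3[of a]
  by (elim disjE) (rule exI[of _ 2], rule exI[of _ 3], simp, rule exI[of _ 1], rule exI[of _ 3], simp,
      rule exI[of _ 1], rule exI[of _ 2], simp)

lemma distinct_3_cases: "distinct [a::3, b, c] \<Longrightarrow> i = a \<or> i = b \<or> i = c"
  using exhaust_3[of a] exhaust_3[of b] exhaust_3[of c] exhaust_3[of i] by auto

lemma norm_det_permuted_lower_unitriangular:
  fixes K :: "complex^3^3"
  assumes "distinct [p, p2, p3]" "K$p$1 = 1" "K$p$2 = 0" "K$p$3 = 0" "K$p2$2 = 1" "K$p2$3 = 0" "K$p3$3 = 1"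
  shows "cmod (det K) = 1"
  using assms exhaust_3[of p] exhaust_3[of p2] exhaust_3[of p3] by (auto simp: det_3)

lemma norm_det_permuted_upper_unitriangular:
  fixes H :: "complex^3^3"
  assumes "distinct [q, c2, c3]" "H$q$1 = 1" "H$c2$1 = 0" "H$c3$1 = 0" "H$c2$2 = 1" "H$c3$2 = 0" "H$c3$3 = 1"
  shows "cmod (det H) = 1"
  using assms exhaust_3[of q] exhaust_3[of c2] exhaust_3[of c3] by (auto simp: det_3)

lemma max_entry_pivot:
  fixes g :: "complex^3^3" assumes "det g \<noteq> 0"
  shows "\<exists>p q. g$p$q \<noteq> 0 \<and> (\<forall>i j. cmod (g$i$j) \<le> cmod (g$p$q))"
proof -
  obtain pq where max: "\<forall>ij. cmod (g $ fst ij $ snd ij) \<le> cmod (g $ fst pq $ snd pq)"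
    using finite_has_max_value[of "\<lambda>ij. cmod (g $ fst ij $ snd ij)"] by blast
  have "g $ fst pq $ snd pq \<noteq> 0"
  proof
    assume "g $ fst pq $ snd pq = 0"
    then have "g *v (\<chi> i. 1) = 0"
      using max by (simp add: matrix_vector_mult_def vec_eq_iff)
    then have "(\<chi> i. 1) = (0::complex^3)" using invertible_mult_vec_eq_0[OF assms] by blast
    then show False by (simp add: vec_eq_iff)
  qed
  then show ?thesis using max by (metis fst_conv snd_conv)
qed

lemma pivot_among_two_columns:
  fixes y :: "3 \<Rightarrow> complex^3"
  assumes "y a $ p = 0" "y b $ p = 0" "y a \<noteq> 0"
  shows "\<exists>r a' b'. ((a', b') = (a, b) \<or> (a', b') = (b, a)) \<and> r \<noteq> p \<and> y a' $ r \<noteq> 0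
           \<and> (\<forall>r'. cmod (y a' $ r') \<le> cmod (y a' $ r) \<and> cmod (y b' $ r') \<le> cmod (y a' $ r))"
proof -
  define val where "val rc = (if fst rc = p then -1 else cmod (y (if snd rc then a else b) $ fst rc))"
    for rc :: "3 \<times> bool"
  obtain rc where max: "\<forall>rc'. val rc' \<le> val rc" using finite_has_max_value[of val] by blast
  define a' where "a' = (if snd rc then a else b)"
  define b' where "b' = (if snd rc then b else a)"
  obtain i where "y a $ i \<noteq> 0" using assms(3) by (auto simp: vec_eq_iff)
  then have "0 < val (i, True)" using assms(1) by (auto simp: val_def)
  then have pos: "0 < val rc" using max[rule_format, of "(i, True)"] by linarith
  then have rp: "fst rc \<noteq> p" by (auto simp: val_def)
  then have "y a' $ fst rc \<noteq> 0" using pos by (auto simp: val_def a'_def)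
  moreover have "cmod (y a' $ r') \<le> cmod (y a' $ fst rc) \<and> cmod (y b' $ r') \<le> cmod (y a' $ fst rc)" for r'
    using max[rule_format, of "(r', True)"] max[rule_format, of "(r', False)"] rp assms(1,2)
    by (cases "r' = p") (auto simp: val_def a'_def b'_def)
  moreover have "(a', b') = (a, b) \<or> (a', b') = (b, a)" by (simp add: a'_def b'_def)
  ultimately show ?thesis using rp by blast
qed

definition elim_vec :: "complex^3^3 \<Rightarrow> 3 \<Rightarrow> 3 \<Rightarrow> 3 \<Rightarrow> complex^3" where
  "elim_vec g p q c = axis c 1 - (g$p$c / g$p$q) *s axis q 1"

lemma elim_vec_pivot_row: "g$p$q \<noteq> 0 \<Longrightarrow> (g *v elim_vec g p q c) $ p = 0"
  by (simp add: elim_vec_def matrix_vector_mult_diff_distrib vector_scalar_commute matrix_vector_mult_axis)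

lemma elim_vec_nth:
  assumes "c \<noteq> q"
  shows "elim_vec g p q c $ c = 1" "i \<noteq> c \<Longrightarrow> i \<noteq> q \<Longrightarrow> elim_vec g p q c $ i = 0"
  using assms by (auto simp: elim_vec_def axis_def)

lemma norm_elim_vec_le:
  assumes "c \<noteq> q" "\<And>i j. cmod (g$i$j) \<le> cmod (g$p$q)"
  shows "cmod (elim_vec g p q c $ i) \<le> 1"
proof (cases "g$p$q = 0")
  case False
  then show ?thesis
    using assms by (auto simp: elim_vec_def axis_def norm_divide divide_le_eq_1)
qed (simp add: elim_vec_def axis_def)

lemma pivoted_columns_factorization:
  fixes g :: "complex^3^3" and w :: "3 \<Rightarrow> complex^3"
  assumes dp: "distinct [p1, p2, p3]"
    and piv: "(g *v w 1) $ p1 \<noteq> 0" "(g *v w 2) $ p2 \<noteq> 0" "(g *v w 3) $ p3 \<noteq> 0"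
    and tri: "(g *v w 2) $ p1 = 0" "(g *v w 3) $ p1 = 0" "(g *v w 3) $ p2 = 0"
    and max: "\<And>r. cmod ((g *v w 1) $ r) \<le> cmod ((g *v w 1) $ p1)"
      "\<And>r. cmod ((g *v w 2) $ r) \<le> cmod ((g *v w 2) $ p2)"
  shows "\<exists>K d. g ** (\<chi> i j. w j $ i) = K ** diag_mat d \<and> (\<forall>i j. cmod (K$i$j) \<le> 1) \<and> cmod (det K) = 1"
proof -
  define p where "p j = (if j = 1 then p1 else if j = 2 then p2 else p3)" for j :: 3
  define K where "K = (\<chi> i j. (g *v w j) $ i / (g *v w j) $ p j)"
  define d where "d = (\<chi> j. (g *v w j) $ p j)"
  have piv_all: "(g *v w j) $ p j \<noteq> 0" for j using exhaust_3[of j] piv by (auto simp: p_def)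
  have "cmod ((g *v w 3) $ r) \<le> cmod ((g *v w 3) $ p3)" for r using tri distinct_3_cases[OF dp, of r] by auto
  then have max_all: "cmod ((g *v w j) $ r) \<le> cmod ((g *v w j) $ p j)" for j r
    using exhaust_3[of j] max by (auto simp: p_def)
  have "g ** (\<chi> i j. w j $ i) = K ** diag_mat d"
    unfolding matrix_mul_columns matrix_mul_diag_mat K_def d_def using piv_all by (simp add: vec_eq_iff)
  moreover have "cmod (K$i$j) \<le> 1" for i j
    unfolding K_def using max_all[of j i] piv_all[of j] by (simp add: norm_divide divide_le_eq_1)
  moreover have "cmod (det K) = 1"
    by (rule norm_det_permuted_lower_unitriangular[OF dp]) (simp_all add: K_def p_def piv tri)
  ultimately show ?thesis by blast
qed

lemma elimination_columns_bounded:
  assumes dq: "distinct [q, c, c']" and max: "\<And>i j. cmod (g$i$j) \<le> cmod (g$p$q)" and "cmod \<beta> \<le> 1"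
  defines "w \<equiv> \<lambda>j::3. if j = 1 then axis q 1 else if j = 2 then elim_vec g p q c
                      else elim_vec g p q c' - \<beta> *s elim_vec g p q c"
  shows "cmod ((\<chi> i j. w j $ i) $ i $ j) \<le> 2" and "cmod (det (\<chi> i j. w j $ i)) = 1"
proof -
  have ne: "q \<noteq> c" "q \<noteq> c'" "c \<noteq> c'" "c \<noteq> q" "c' \<noteq> q" "c' \<noteq> c" using dq by auto
  have le: "cmod (elim_vec g p q b $ i) \<le> 1" if "b \<noteq> q" for b i using that max by (rule norm_elim_vec_le)
  have "cmod (w 3 $ i) \<le> cmod (elim_vec g p q c' $ i) + cmod \<beta> * cmod (elim_vec g p q c $ i)"
    unfolding w_def by (simp add: norm_triangle_ineq4 norm_mult[symmetric])
  also have "\<dots> \<le> 1 + 1 * 1"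
    using le[of c' i] le[of c i] ne \<open>cmod \<beta> \<le> 1\<close> by (intro add_mono mult_mono) auto
  finally show "cmod ((\<chi> i j. w j $ i) $ i $ j) \<le> 2"
    using le[of c i] ne exhaust_3[of j] by (auto simp: w_def axis_def)
  show "cmod (det (\<chi> i j. w j $ i)) = 1"
    by (rule norm_det_permuted_upper_unitriangular[OF dq])
      (use elim_vec_nth[where c = c and q = q and g = g and p = p]
        elim_vec_nth[where c = c' and q = q and g = g and p = p] ne in \<open>simp_all add: w_def axis_def\<close>)
qed

text \<open>Gaussian elimination with pivoting on the columns of \<open>g\<close>: \<open>H\<close> is a permuted unit upper
  triangular matrix and \<open>K\<close> a permuted unit lower triangular one; pivoting keeps both bounded.\<close>
lemma bounded_LU_factorization:
  fixes g :: "complex^3^3" assumes dg: "det g \<noteq> 0"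
  shows "\<exists>K H d. g ** H = K ** diag_mat d \<and> (\<forall>i j. cmod (K$i$j) \<le> 1) \<and> cmod (det K) = 1
           \<and> (\<forall>i j. cmod (H$i$j) \<le> 2) \<and> cmod (det H) = 1"
proof -
  obtain p q where piv: "g$p$q \<noteq> 0" and max: "\<And>i j. cmod (g$i$j) \<le> cmod (g$p$q)"
    using max_entry_pivot[OF dg] by blast
  obtain c2 c3 where "distinct [q, c2, c3]" using exists_distinct_3 by blast
  define v where "v = elim_vec g p q"
  have "v c2 $ c2 = 1" using elim_vec_nth(1)[of c2 q g p] \<open>distinct [q, c2, c3]\<close> by (auto simp: v_def)
  then have "g *v v c2 \<noteq> 0" using invertible_mult_vec_eq_0[OF dg] by fastforce
  then obtain r C2 C3 where C: "(C2, C3) = (c2, c3) \<or> (C2, C3) = (c3, c2)" and "r \<noteq> p"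
    and piv2: "(g *v v C2) $ r \<noteq> 0"
    and max2: "\<And>r'. cmod ((g *v v C2) $ r') \<le> cmod ((g *v v C2) $ r)
                   \<and> cmod ((g *v v C3) $ r') \<le> cmod ((g *v v C2) $ r)"
    using pivot_among_two_columns[of "\<lambda>c. g *v v c" c2 p c3] elim_vec_pivot_row[OF piv] unfolding v_def by blast
  have dq: "distinct [q, C2, C3]" using C \<open>distinct [q, c2, c3]\<close> by auto
  obtain p3 where dp: "distinct [p, r, p3]"
  proof -
    obtain a b where "distinct [p, a, b]" using exists_distinct_3 by blast
    then show ?thesis using that[of a] that[of b] distinct_3_cases[of p a b r] \<open>r \<noteq> p\<close> by auto
  qed
  define \<beta> where "\<beta> = (g *v v C3) $ r / (g *v v C2) $ r"
  define w where "w j = (if j = 1 then axis q 1 else if j = 2 then v C2 else v C3 - \<beta> *s v C2)" for j :: 3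
  have "cmod \<beta> \<le> 1" using max2 piv2 by (simp add: \<beta>_def norm_divide divide_le_eq_1)
  have gw3: "(g *v w 3) $ p = 0" "(g *v w 3) $ r = 0"
    using elim_vec_pivot_row[OF piv] piv2
    by (simp_all add: w_def \<beta>_def v_def matrix_vector_mult_diff_distrib vector_scalar_commute)
  have "w 3 $ C3 = 1"
    using elim_vec_nth[where c = C2 and q = q and g = g and p = p]
      elim_vec_nth[where c = C3 and q = q and g = g and p = p] dq by (auto simp: w_def v_def)
  then have "g *v w 3 \<noteq> 0" using invertible_mult_vec_eq_0[OF dg] by fastforce
  then obtain i where "(g *v w 3) $ i \<noteq> 0" by (auto simp: vec_eq_iff)
  then have "(g *v w 3) $ p3 \<noteq> 0" using gw3 distinct_3_cases[OF dp, of i] by auto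
  have "\<exists>K d. g ** (\<chi> i j. w j $ i) = K ** diag_mat d \<and> (\<forall>i j. cmod (K$i$j) \<le> 1) \<and> cmod (det K) = 1"
    by (rule pivoted_columns_factorization[OF dp])
      (use piv piv2 gw3 max max2 elim_vec_pivot_row[OF piv] \<open>(g *v w 3) $ p3 \<noteq> 0\<close>
        in \<open>simp_all add: w_def v_def matrix_vector_mult_axis\<close>)
  moreover have "cmod ((\<chi> i j. w j $ i) $ i $ j) \<le> 2" "cmod (det (\<chi> i j. w j $ i)) = 1" for i j
    using elimination_columns_bounded[OF dq max \<open>cmod \<beta> \<le> 1\<close>] unfolding w_def v_def by simp_all
  ultimately show ?thesis by blast
qed

section \<open>Instability is witnessed by a one-parameter torus\<close>

lemma norm_monomial_le:
  assumes "\<And>i. cmod (y$i) \<le> R" shows "cmod (monomial e y) \<le> R ^ sum e UNIV"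
proof -
  have "cmod (monomial e y) = (\<Prod>i\<in>UNIV. cmod (y$i) ^ e i)"
    unfolding monomial_def by (simp add: prod_norm[symmetric] norm_power)
  also have "\<dots> \<le> (\<Prod>i\<in>UNIV. R ^ e i)"
    by (intro prod_mono conjI power_mono assms zero_le_power norm_ge_zero)
  finally show ?thesis by (simp add: power_sum)
qed

lemma norm_matrix_vector_nth_le:
  fixes H :: "complex^3^3" assumes "\<And>i j. cmod (H$i$j) \<le> B"
  shows "cmod ((H *v x)$i) \<le> B * (\<Sum>j\<in>UNIV. cmod (x$j))"
proof -
  have "cmod ((H *v x)$i) \<le> (\<Sum>j\<in>UNIV. cmod (H$i$j * x$j))"
    unfolding matrix_vector_mult_def by (simp add: norm_sum)
  also have "\<dots> \<le> (\<Sum>j\<in>UNIV. B * cmod (x$j))"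
    by (intro sum_mono) (simp add: norm_mult assms mult_right_mono)
  finally show ?thesis by (simp add: sum_distrib_left)
qed

lemma tendsto_zero_mult_bounded:
  assumes "(a \<longlongrightarrow> 0) F" "\<And>n. cmod (b n) \<le> C" shows "((\<lambda>n. a n * b n :: complex) \<longlongrightarrow> 0) F"
proof (rule tendsto_0_le[OF assms(1), of _ C])
  show "\<forall>\<^sub>F x in F. norm (a x * b x) \<le> norm (a x) * C"
    using assms(2) by (intro always_eventually allI) (simp add: norm_mult mult_left_mono)
qed

lemma tendsto_zero_factor:
  fixes a b :: "nat \<Rightarrow> complex"
  assumes "(\<lambda>n. a n * b n) \<longlonglongrightarrow> 0" "a \<longlonglongrightarrow> \<alpha>" "\<alpha> \<noteq> 0"
  shows "b \<longlonglongrightarrow> 0"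
proof -
  have "(\<lambda>n. a n * b n / a n) \<longlonglongrightarrow> 0 / \<alpha>" by (intro tendsto_divide assms)
  moreover have "\<forall>\<^sub>F n in sequentially. a n * b n / a n = b n"
    using tendsto_imp_eventually_ne[OF assms(2,3)] by eventually_elim simp
  ultimately show ?thesis using Lim_transform_eventually by fastforce
qed

lemma bounded_range_if_entries_le:
  fixes K :: "nat \<Rightarrow> complex^3^3" assumes "\<And>n i j. cmod (K n $ i $ j) \<le> 1"
  shows "bounded (range K)"
proof -
  have row: "norm (K n $ i) \<le> 3" for n i
  proof -
    have "norm (K n $ i) \<le> (\<Sum>j\<in>UNIV. norm (K n $ i $ j))"
      unfolding norm_vec_def by (rule L2_set_le_sum) simp
    also have "\<dots> \<le> (\<Sum>j\<in>(UNIV::3 set). 1)" by (rule sum_mono) (use assms in simp)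
    finally show ?thesis by simp
  qed
  have "norm (K n) \<le> (\<Sum>i\<in>(UNIV::3 set). 3)" for n
  proof -
    have "norm (K n) \<le> (\<Sum>i\<in>UNIV. norm (K n $ i))" unfolding norm_vec_def by (rule L2_set_le_sum) simp
    also have "\<dots> \<le> (\<Sum>i\<in>(UNIV::3 set). 3)" by (rule sum_mono) (rule row)
    finally show ?thesis .
  qed
  then show ?thesis unfolding bounded_iff by auto
qed

lemma tendsto_det_3:
  fixes K :: "nat \<Rightarrow> complex^3^3" assumes "K \<longlonglongrightarrow> K0" shows "(\<lambda>n. det (K n)) \<longlonglongrightarrow> det K0"
  unfolding det_3 by (intro tendsto_intros assms)

lemma form_coeff_compose_diagonal:
  assumes "homogeneous d F" "e \<in> exponents d"
  shows "form_coeff d (\<lambda>x. F (\<chi> i. a$i * x$i)) e = form_coeff d F e * monomial e a"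
proof (rule form_coeff_eq[OF _ assms(2)])
  fix x
  show "F (\<chi> i. a$i * x$i) = (\<Sum>e\<in>exponents d. (form_coeff d F e * monomial e a) * monomial e x)"
    using homogeneous_eq_form_coeff[OF assms(1), of "\<chi> i. a$i * x$i"]
    by (simp add: monomial_scale mult.assoc)
qed

text \<open>Write \<open>g\<^sub>n H\<^sub>n = K\<^sub>n D\<^sub>n\<close>; as \<open>H\<^sub>n\<close> is bounded, \<open>F \<circ> g\<^sub>n \<rightarrow> 0\<close> coefficientwise forces
  \<open>F \<circ> K\<^sub>n D\<^sub>n \<rightarrow> 0\<close>.\<close>
lemma unstable_imp_diagonal_destabilizing:
  assumes F: "homogeneous d F" and g1: "\<And>n. det (g n) = 1" and gl: "\<And>x. (\<lambda>n. F (g n *v x)) \<longlonglongrightarrow> 0"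
  shows "\<exists>K D. (\<forall>n i j. cmod (K n $i$j) \<le> 1) \<and> (\<forall>n. cmod (det (K n)) = 1)
           \<and> (\<forall>n. cmod (D n $ 1 * D n $ 2 * D n $ 3) = 1)
           \<and> (\<forall>x. (\<lambda>n. F (K n *v (\<chi> i. D n $ i * x $ i))) \<longlonglongrightarrow> 0)"
proof -
  obtain K H D where KHD: "\<And>n. g n ** H n = K n ** diag_mat (D n)"
    and Kb: "\<And>n i j. cmod (K n $i$j) \<le> 1" and dK: "\<And>n. cmod (det (K n)) = 1"
    and Hb: "\<And>n i j. cmod (H n $i$j) \<le> 2" and dH: "\<And>n. cmod (det (H n)) = 1"
  proof -
    have "\<forall>n. \<exists>K H D. g n ** H = K ** diag_mat D \<and> (\<forall>i j. cmod (K$i$j) \<le> 1) \<and> cmod (det K) = 1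
           \<and> (\<forall>i j. cmod (H$i$j) \<le> 2) \<and> cmod (det H) = 1"
      using bounded_LU_factorization g1 by simp
    then show ?thesis using that by metis
  qed
  have "cmod (D n $ 1 * D n $ 2 * D n $ 3) = 1" for n
    using arg_cong[OF KHD[of n], of det] dK[of n] dH[of n] g1[of n]
    by (simp add: det_mul det_diag_mat norm_mult)
  moreover have "(\<lambda>n. F (K n *v (\<chi> i. D n $ i * x $ i))) \<longlonglongrightarrow> 0" for x
  proof -
    have "F (K n *v (\<chi> i. D n $ i * x $ i))
        = (\<Sum>e\<in>exponents d. form_coeff d (\<lambda>y. F (g n *v y)) e * monomial e (H n *v x))" for n
    proof -
      have "g n *v (H n *v x) = (K n ** diag_mat (D n)) *v x"
        by (simp add: matrix_vector_mul_assoc KHD)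
      also have "\<dots> = K n *v (\<chi> i. D n $ i * x $ i)"
        by (simp add: matrix_vector_mul_assoc[symmetric] diag_mat_mult_vec)
      finally have "g n *v (H n *v x) = K n *v (\<chi> i. D n $ i * x $ i)" .
      then show ?thesis
        using homogeneous_eq_form_coeff[OF homogeneous_compose_linear[OF F], of "g n" "H n *v x"] by simp
    qed
    moreover have "(\<lambda>n. \<Sum>e\<in>exponents d. form_coeff d (\<lambda>y. F (g n *v y)) e * monomial e (H n *v x)) \<longlonglongrightarrow> 0"
    proof (intro tendsto_null_sum tendsto_zero_mult_bounded)
      show "(\<lambda>n. form_coeff d (\<lambda>y. F (g n *v y)) e) \<longlonglongrightarrow> 0" for e
        using form_coeff_tendsto[of "\<lambda>n y. F (g n *v y)" "\<lambda>_. 0"] gl by simp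
      show "cmod (monomial e (H n *v x)) \<le> (2 * (\<Sum>j\<in>UNIV. cmod (x$j))) ^ sum e UNIV" for e n
        by (intro norm_monomial_le norm_matrix_vector_nth_le Hb)
    qed
    ultimately show ?thesis by simp
  qed
  ultimately show ?thesis using Kb dK by blast
qed

lemma norm_monomial_less_1_iff:
  assumes "\<And>i. a$i \<noteq> 0"
  shows "cmod (monomial e a) < 1 \<longleftrightarrow> (\<Sum>i\<in>UNIV. real (e i) * ln (cmod (a$i))) < 0"
proof -
  have "ln (cmod (monomial e a)) = (\<Sum>i\<in>UNIV. real (e i) * ln (cmod (a$i)))"
    unfolding monomial_def using assms by (simp add: prod_norm[symmetric] norm_power ln_prod ln_realpow)
  moreover have "0 < cmod (monomial e a)" using assms by (simp add: monomial_def)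
  ultimately show ?thesis by (simp add: ln_less_zero_iff[symmetric])
qed

lemma monomial_tendsto_zero_if_coeff_nonzero:
  assumes F: "homogeneous d F" and Kl: "K \<longlonglongrightarrow> K0"
    and lim: "\<And>x. (\<lambda>n. F (K n *v (\<chi> i. D n $ i * x $ i))) \<longlonglongrightarrow> 0"
    and e: "e \<in> exponents d" and ne: "form_coeff d (\<lambda>x. F (K0 *v x)) e \<noteq> 0"
  shows "(\<lambda>n. monomial e (D n)) \<longlonglongrightarrow> 0"
proof (rule tendsto_zero_factor[OF _ _ ne])
  have FK: "homogeneous d (\<lambda>x. F (K n *v x))" for n by (rule homogeneous_compose_linear[OF F])
  have "(\<lambda>n. form_coeff d (\<lambda>x. F (K n *v (\<chi> i. D n $ i * x $ i))) e) \<longlonglongrightarrow> 0"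
    using form_coeff_tendsto[of "\<lambda>n x. F (K n *v (\<chi> i. D n $ i * x $ i))" "\<lambda>_. 0"] lim by simp
  then show "(\<lambda>n. form_coeff d (\<lambda>x. F (K n *v x)) e * monomial e (D n)) \<longlonglongrightarrow> 0"
    by (simp add: form_coeff_compose_diagonal[OF FK e])
  show "(\<lambda>n. form_coeff d (\<lambda>x. F (K n *v x)) e) \<longlonglongrightarrow> form_coeff d (\<lambda>x. F (K0 *v x)) e"
    unfolding matrix_vector_mult_def by (intro form_coeff_tendsto homogeneous_tendsto[OF F] tendsto_intros Kl)
qed

text \<open>The elementary half of the Hilbert--Mumford criterion; \<open>u\<close> is the logarithm of the moduli of
  the diagonal factor \<open>D\<^sub>n\<close> for one large \<open>n\<close>.\<close>
lemma unstable_imp_negative_weights: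
  assumes F: "homogeneous d F" and U: "quartic_unstable F"
  shows "\<exists>K u. det K \<noteq> 0 \<and> sum u UNIV = 0 \<and>
           (\<forall>e\<in>exponents d. form_coeff d (\<lambda>x. F (K *v x)) e \<noteq> 0 \<longrightarrow> (\<Sum>i\<in>UNIV. real (e i) * u i) < 0)"
proof -
  obtain g :: "nat \<Rightarrow> complex^3^3" where g1: "\<And>n. det (g n) = 1"
    and gl: "\<And>x. (\<lambda>n. F (g n *v x)) \<longlonglongrightarrow> 0"
    using U unfolding quartic_unstable_def by blast
  obtain K D where Kb: "\<And>n i j. cmod (K n $i$j) \<le> 1" and dK: "\<And>n. cmod (det (K n)) = 1"
    and dD: "\<And>n. cmod (D n $ 1 * D n $ 2 * D n $ 3) = 1"
    and lim: "\<And>x. (\<lambda>n. F (K n *v (\<chi> i. D n $ i * x $ i))) \<longlonglongrightarrow> 0"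
    using unstable_imp_diagonal_destabilizing[OF F g1 gl] by blast
  have "bounded (range K)" by (rule bounded_range_if_entries_le[OF Kb])
  then obtain K0 r where r: "strict_mono r" and "(K \<circ> r) \<longlonglongrightarrow> K0"
    using bounded_imp_convergent_subsequence by blast
  then have Kr: "(\<lambda>n. K (r n)) \<longlonglongrightarrow> K0" by (simp add: o_def)
  have "(\<lambda>n. cmod (det (K (r n)))) \<longlonglongrightarrow> cmod (det K0)"
    by (intro tendsto_norm tendsto_det_3 Kr)
  moreover have "(\<lambda>n. cmod (det (K (r n)))) \<longlonglongrightarrow> 1" using dK by simp
  ultimately have "cmod (det K0) = 1" using LIMSEQ_unique by blast
  define S where "S = {e\<in>exponents d. form_coeff d (\<lambda>x. F (K0 *v x)) e \<noteq> 0}"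
  have "(\<lambda>n. F (K (r n) *v (\<chi> i. D (r n) $ i * x $ i))) \<longlonglongrightarrow> 0" for x
    using LIMSEQ_subseq_LIMSEQ[OF lim r] by (simp add: o_def)
  then have "(\<lambda>n. monomial e (D (r n))) \<longlonglongrightarrow> 0" if "e \<in> S" for e
    using monomial_tendsto_zero_if_coeff_nonzero[OF F Kr] that by (simp add: S_def)
  then have "\<forall>\<^sub>F n in sequentially. \<forall>e\<in>S. cmod (monomial e (D (r n))) < 1"
    by (intro eventually_ball_finite ballI order_tendstoD(2)[OF tendsto_norm_zero]) (simp_all add: S_def)
  then obtain N where N: "\<forall>e\<in>S. cmod (monomial e (D (r N))) < 1"
    unfolding eventually_sequentially by blast
  define u where "u i = ln (cmod (D (r N) $ i))" for i
  have nz: "D (r N) $ i \<noteq> 0" for i using dD[of "r N"] exhaust_3[of i] by auto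
  have "sum u UNIV = ln (cmod (D (r N) $ 1 * D (r N) $ 2 * D (r N) $ 3))"
    using nz by (simp add: u_def sum_3 norm_mult ln_mult)
  then have "sum u UNIV = 0" using dD by simp
  moreover have "det K0 \<noteq> 0" using \<open>cmod (det K0) = 1\<close> by auto
  ultimately show ?thesis using N nz unfolding S_def u_def
    by (intro exI[of _ K0] exI[of _ u]) (auto simp: u_def norm_monomial_less_1_iff)
qed

section \<open>Quartics all of whose monomials have negative weight\<close>

lemma negative_weight_exponents:
  fixes x y z :: nat and ua ub uc :: real
  assumes "x + y + z = 4" "ub \<le> ua" "uc \<le> ub" "ua + ub + uc = 0" "x * ua + y * ub + z * uc < 0"
  shows "x \<le> 1 \<or> (x = 2 \<and> y = 0 \<and> z = 2 \<and> 0 < ub)"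
proof -
  have "x = 0 \<or> x = 1 \<or> x = 2 \<or> x = 3 \<or> x = 4" "y = 0 \<or> y = 1 \<or> y = 2 \<or> y = 3 \<or> y = 4"
    using assms(1) by arith+
  then show ?thesis using assms by (elim disjE) (simp_all, linarith?)
qed

lemma negative_weight_exponents_excluded:
  fixes x y z :: nat and ua ub uc :: real
  assumes "x + y + z = 4" "ub \<le> ua" "uc \<le> ub" "ua + ub + uc = 0" "x * ua + y * ub + z * uc < 0"
    and "0 < ub"
  shows "\<not> (x = 1 \<and> y = 3) \<and> \<not> (x = 1 \<and> y = 2 \<and> z = 1) \<and> y \<noteq> 4"
proof -
  have "x = 0 \<or> x = 1 \<or> x = 2 \<or> x = 3 \<or> x = 4" "y = 0 \<or> y = 1 \<or> y = 2 \<or> y = 3 \<or> y = 4"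
    using assms(1) by arith+
  then show ?thesis using assms by (elim disjE) (simp_all, linarith?)
qed

definition exponent3 :: "3 \<Rightarrow> 3 \<Rightarrow> 3 \<Rightarrow> nat \<Rightarrow> nat \<Rightarrow> nat \<Rightarrow> 3 \<Rightarrow> nat" where
  "exponent3 \<alpha> \<beta> \<gamma> x y z = (\<lambda>i. if i = \<alpha> then x else if i = \<beta> then y else z)"

lemma distinct_3_neq:
  "distinct [\<alpha>, \<beta>, \<gamma>] \<Longrightarrow> \<alpha> \<noteq> \<beta> \<and> \<beta> \<noteq> \<alpha> \<and> \<alpha> \<noteq> \<gamma> \<and> \<gamma> \<noteq> \<alpha> \<and> \<beta> \<noteq> \<gamma> \<and> \<gamma> \<noteq> \<beta>"
  by auto

lemma UNIV_distinct_3: "distinct [\<alpha>, \<beta>, \<gamma>::3] \<Longrightarrow> UNIV = {\<alpha>, \<beta>, \<gamma>}"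
  using distinct_3_cases by auto

lemma prod_UNIV_distinct_3:
  assumes "distinct [\<alpha>, \<beta>, \<gamma>::3]" shows "prod f UNIV = f \<alpha> * f \<beta> * (f \<gamma> :: 'a::comm_monoid_mult)"
proof -
  have "prod f UNIV = prod f {\<alpha>, \<beta>, \<gamma>}" using UNIV_distinct_3[OF assms] by simp
  also have "\<dots> = f \<alpha> * (f \<beta> * f \<gamma>)" using assms by simp
  finally show ?thesis by (simp add: mult.assoc)
qed

lemma sum_UNIV_distinct_3:
  assumes "distinct [\<alpha>, \<beta>, \<gamma>::3]" shows "sum f UNIV = f \<alpha> + f \<beta> + (f \<gamma> :: 'a::comm_monoid_add)"
proof -
  have "sum f UNIV = sum f {\<alpha>, \<beta>, \<gamma>}" using UNIV_distinct_3[OF assms] by simp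
  also have "\<dots> = f \<alpha> + (f \<beta> + f \<gamma>)" using assms by simp
  finally show ?thesis by (simp add: add.assoc)
qed

lemma exponent3_eq_iff:
  assumes "distinct [\<alpha>, \<beta>, \<gamma>]"
  shows "e = exponent3 \<alpha> \<beta> \<gamma> x y z \<longleftrightarrow> e \<alpha> = x \<and> e \<beta> = y \<and> e \<gamma> = z"
proof
  assume e: "e \<alpha> = x \<and> e \<beta> = y \<and> e \<gamma> = z"
  show "e = exponent3 \<alpha> \<beta> \<gamma> x y z"
  proof
    fix i
    from distinct_3_cases[OF assms, of i] show "e i = exponent3 \<alpha> \<beta> \<gamma> x y z i"
      using e distinct_3_neq[OF assms] by (elim disjE) (simp_all add: exponent3_def)
  qed
qed (use distinct_3_neq[OF assms] in \<open>simp add: exponent3_def\<close>)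

lemma exponents_distinct_3: "distinct [\<alpha>, \<beta>, \<gamma>] \<Longrightarrow> e \<in> exponents d \<longleftrightarrow> e \<alpha> + e \<beta> + e \<gamma> = d"
  unfolding exponents_def by (simp add: sum_UNIV_distinct_3)

lemma exponent3_in_exponents:
  assumes "distinct [\<alpha>, \<beta>, \<gamma>]" shows "exponent3 \<alpha> \<beta> \<gamma> x y z \<in> exponents (x + y + z)"
  using exponents_distinct_3[OF assms] distinct_3_neq[OF assms] by (simp add: exponent3_def)

lemma monomial_distinct_3:
  "distinct [\<alpha>, \<beta>, \<gamma>] \<Longrightarrow> monomial e x = x$\<alpha> ^ e \<alpha> * x$\<beta> ^ e \<beta> * x$\<gamma> ^ e \<gamma>"
  unfolding monomial_def by (rule prod_UNIV_distinct_3)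

definition line_poly :: "(3 \<Rightarrow> nat) \<Rightarrow> complex^3 \<Rightarrow> complex^3 \<Rightarrow> complex poly" where
  "line_poly e p x = (\<Prod>i\<in>UNIV. [:p$i, x$i:] ^ e i)"

lemma poly_line_poly: "poly (line_poly e p x) t = monomial e (p + cvec t x)"
  unfolding monomial_def line_poly_def cvec_def by (simp add: poly_prod poly_power algebra_simps)

lemma line_poly_distinct_3:
  "distinct [\<alpha>, \<beta>, \<gamma>] \<Longrightarrow>
     line_poly e p x = [:p$\<alpha>, x$\<alpha>:] ^ e \<alpha> * [:p$\<beta>, x$\<beta>:] ^ e \<beta> * [:p$\<gamma>, x$\<gamma>:] ^ e \<gamma>"
  unfolding line_poly_def by (rule prod_UNIV_distinct_3)

lemma form_on_line:
  assumes "\<forall>x. F x = (\<Sum>e\<in>exponents d. c e * monomial e x)"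
  shows "F (p + cvec t x) = poly (\<Sum>e\<in>exponents d. smult (c e) (line_poly e p x)) t"
  by (simp add: assms poly_line_poly poly_sum)

lemma homogeneous_on_line: "homogeneous d f \<Longrightarrow> \<exists>P. \<forall>t. f (p + cvec t x) = poly P t"
  unfolding homogeneous_def using form_on_line by blast

lemma mult_ge_if_dvd_line_polys:
  assumes "\<forall>x. F x = (\<Sum>e\<in>exponents d. c e * monomial e x)"
    and "\<And>x. [:0, 1:] ^ m dvd (\<Sum>e\<in>exponents d. smult (c e) (line_poly e p x))"
  shows "mult_ge F p m"
  unfolding mult_ge_def
proof
  fix x
  obtain q where "(\<Sum>e\<in>exponents d. smult (c e) (line_poly e p x)) = [:0, 1:] ^ m * q"
    using assms(2)[of x] by (elim dvdE)
  then show "\<exists>q. \<forall>t. F (p + cvec t x) = t ^ m * poly q t"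
    by (intro exI[of _ q]) (simp add: form_on_line[OF assms(1)] poly_power)
qed

lemma dvd_sum_supported:
  assumes "\<And>e. e \<in> exponents d \<Longrightarrow> c e \<noteq> 0 \<Longrightarrow> r dvd line_poly e p x"
  shows "r dvd (\<Sum>e\<in>exponents d. smult (c e) (line_poly e p x))"
proof (rule dvd_sum)
  fix e assume "e \<in> exponents d"
  then show "r dvd smult (c e) (line_poly e p x)"
    using assms by (cases "c e = 0") (auto intro: dvd_smult)
qed

lemma X_power_dvd_linear_power: "[:0, 1:] ^ k dvd [:0, b:] ^ k"
  by (rule dvd_power_same) (rule dvdI[of _ _ "[:b:]"], simp)

lemma triple_point_if_coord_degree_le_1:
  assumes F: "\<forall>x. F x = (\<Sum>e\<in>exponents 4. c e * monomial e x)" and d3: "distinct [\<alpha>, \<beta>, \<gamma>]"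
    and low: "\<And>e. e \<in> exponents 4 \<Longrightarrow> c e \<noteq> 0 \<Longrightarrow> e \<alpha> \<le> 1"
  shows "has_triple_point F"
  unfolding has_triple_point_def
proof (intro exI conjI)
  show "axis \<alpha> 1 \<noteq> (0 :: complex^3)" by (simp add: axis_eq_0_iff)
  show "mult_ge F (axis \<alpha> 1) 3"
  proof (rule mult_ge_if_dvd_line_polys[OF F], rule dvd_sum_supported)
    fix x :: "complex^3" and e assume e: "e \<in> exponents 4" and "c e \<noteq> 0"
    then have "3 \<le> e \<beta> + e \<gamma>" using low exponents_distinct_3[OF d3] by fastforce
    then have "[:0, 1:] ^ 3 dvd ([:0, 1:] ^ (e \<beta> + e \<gamma>) :: complex poly)" by (rule le_imp_power_dvd)
    also have "\<dots> dvd [:0, x$\<beta>:] ^ e \<beta> * [:0, x$\<gamma>:] ^ e \<gamma>"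
      unfolding power_add by (intro mult_dvd_mono X_power_dvd_linear_power)
    also have "\<dots> dvd line_poly e (axis \<alpha> 1) x"
      using distinct_3_neq[OF d3] by (simp add: line_poly_distinct_3[OF d3] axis_def mult.assoc)
    finally show "[:0, 1:] ^ 3 dvd line_poly e (axis \<alpha> 1) x" .
  qed
qed

lemma binary_quadratic_has_zero:
  fixes b0 b1 b2 :: complex
  shows "\<exists>s t. (s \<noteq> 0 \<or> t \<noteq> 0) \<and> b0 * t^2 + b1 * s * t + b2 * s^2 = 0"
proof (cases "b2 = 0")
  case True
  then show ?thesis by (intro exI[of _ 1] exI[of _ 0]) simp
next
  case False
  define r where "r = csqrt (b1^2 - 4 * b2 * b0)"
  define s where "s = (- b1 + r) / (2 * b2)"
  have "r * r = b1^2 - 4 * b2 * b0" unfolding r_def by (metis power2_csqrt power2_eq_square)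
  moreover have "b0 + b1 * s + b2 * s^2 = (r * r - (b1^2 - 4 * b2 * b0)) / (4 * b2)"
    unfolding s_def using False by (simp add: field_simps power2_eq_square)
  ultimately have "b0 + b1 * s + b2 * s^2 = 0" by simp
  then show ?thesis by (intro exI[of _ s] exI[of _ 1]) simp
qed

lemma binary_quadric_part_has_zero:
  assumes d3: "distinct [\<alpha>, \<beta>, \<gamma>]" and "finite A" and A: "\<And>e. e \<in> A \<Longrightarrow> e \<alpha> + e \<beta> = 2"
  shows "\<exists>p :: complex^3. p \<noteq> 0 \<and> p$\<gamma> = 0 \<and> (\<Sum>e\<in>A. c e * (p$\<alpha>) ^ e \<alpha> * (p$\<beta>) ^ e \<beta>) = 0"
proof -
  define b where "b k = (\<Sum>e\<in>A. if e \<alpha> = k then c e else 0)" for k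
  obtain s t where st: "s \<noteq> 0 \<or> t \<noteq> 0" and zero: "b 0 * t^2 + b 1 * s * t + b 2 * s^2 = 0"
    using binary_quadratic_has_zero by blast
  define p where "p = (\<chi> i. if i = \<alpha> then s else if i = \<beta> then t else 0)"
  have p: "p$\<alpha> = s" "p$\<beta> = t" "p$\<gamma> = 0" using distinct_3_neq[OF d3] by (auto simp: p_def)
  have summand: "c e * s ^ e \<alpha> * t ^ e \<beta> =
      (if e \<alpha> = 0 then c e else 0) * t^2 + (if e \<alpha> = 1 then c e else 0) * s * t
        + (if e \<alpha> = 2 then c e else 0) * s^2" if "e \<in> A" for e
  proof -
    have "e \<alpha> = 0 \<and> e \<beta> = 2 \<or> e \<alpha> = 1 \<and> e \<beta> = 1 \<or> e \<alpha> = 2 \<and> e \<beta> = 0"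
      using A[OF that] by arith
    then show ?thesis by (elim disjE) (simp_all add: power2_eq_square)
  qed
  have "(\<Sum>e\<in>A. c e * (p$\<alpha>) ^ e \<alpha> * (p$\<beta>) ^ e \<beta>)
      = (\<Sum>e\<in>A. (if e \<alpha> = 0 then c e else 0) * t^2 + (if e \<alpha> = 1 then c e else 0) * s * t
          + (if e \<alpha> = 2 then c e else 0) * s^2)"
    unfolding p by (rule sum.cong[OF refl]) (rule summand)
  also have "\<dots> = b 0 * t^2 + b 1 * s * t + b 2 * s^2"
    unfolding b_def sum.distrib sum_distrib_right ..
  finally have "(\<Sum>e\<in>A. c e * (p$\<alpha>) ^ e \<alpha> * (p$\<beta>) ^ e \<beta>) = 0" using zero by simp
  moreover have "p \<noteq> 0" using st p by (auto simp: vec_eq_iff)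
  ultimately show ?thesis using p by blast
qed

text \<open>If \<open>x\<^sub>\<gamma>\<^sup>2\<close> divides \<open>F\<close>, take a point of the line \<open>x\<^sub>\<gamma> = 0\<close> on the residual conic.\<close>
lemma triple_point_if_coord_square_divides:
  assumes F: "\<forall>x. F x = (\<Sum>e\<in>exponents 4. c e * monomial e x)" and d3: "distinct [\<alpha>, \<beta>, \<gamma>]"
    and sq: "\<And>e. e \<in> exponents 4 \<Longrightarrow> c e \<noteq> 0 \<Longrightarrow> 2 \<le> e \<gamma>"
  shows "has_triple_point F"
proof -
  define A where "A = {e \<in> exponents 4. e \<gamma> = 2}"
  have "e \<alpha> + e \<beta> = 2" if "e \<in> A" for e using that exponents_distinct_3[OF d3] by (auto simp: A_def)
  then obtain p where "p \<noteq> 0" and p\<gamma>: "p$\<gamma> = 0"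
    and hp: "(\<Sum>e\<in>A. c e * (p$\<alpha>) ^ e \<alpha> * (p$\<beta>) ^ e \<beta>) = 0"
    using binary_quadric_part_has_zero[OF d3, of A c] by (auto simp: A_def)
  have "mult_ge F p 3"
  proof (rule mult_ge_if_dvd_line_polys[OF F])
    fix x :: "complex^3"
    have lp: "line_poly e p x = [:p$\<alpha>, x$\<alpha>:] ^ e \<alpha> * [:p$\<beta>, x$\<beta>:] ^ e \<beta> * [:0, x$\<gamma>:] ^ e \<gamma>" for e
      using line_poly_distinct_3[OF d3, of e p x] p\<gamma> by simp
    have "[:0, 1:] ^ 3 dvd (\<Sum>e\<in>exponents 4 - A. smult (c e) (line_poly e p x))"
    proof (intro dvd_sum)
      fix e assume e: "e \<in> exponents 4 - A"
      show "[:0, 1:] ^ 3 dvd smult (c e) (line_poly e p x)"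
      proof (cases "c e = 0")
        case False
        then have "3 \<le> e \<gamma>" using sq[of e] e by (auto simp: A_def)
        then have "[:0, 1:] ^ 3 dvd ([:0, 1:] ^ e \<gamma> :: complex poly)" by (rule le_imp_power_dvd)
        also have "\<dots> dvd line_poly e p x" unfolding lp by (rule dvd_mult) (rule X_power_dvd_linear_power)
        finally show ?thesis by (rule dvd_smult)
      qed simp
    qed
    moreover have "[:0, 1:] ^ 3 dvd (\<Sum>e\<in>A. smult (c e) (line_poly e p x))"
    proof -
      define Q where "Q = (\<Sum>e\<in>A. smult (c e) ([:p$\<alpha>, x$\<alpha>:] ^ e \<alpha> * [:p$\<beta>, x$\<beta>:] ^ e \<beta>))"
      have "(\<Sum>e\<in>A. smult (c e) (line_poly e p x)) = [:0, x$\<gamma>:] ^ 2 * Q"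
        unfolding Q_def sum_distrib_left by (intro sum.cong refl) (simp add: A_def lp algebra_simps)
      moreover have "poly Q 0 = 0" using hp by (simp add: Q_def poly_sum poly_power mult.assoc)
      then have "[:0, 1:] ^ 2 * [:0, 1:] dvd [:0, x$\<gamma>:] ^ 2 * Q"
        by (intro mult_dvd_mono X_power_dvd_linear_power) (simp add: dvd_iff_poly_eq_0)
      ultimately show ?thesis by (simp add: power3_eq_cube power2_eq_square mult.assoc)
    qed
    moreover have "(\<Sum>e\<in>exponents 4. smult (c e) (line_poly e p x))
        = (\<Sum>e\<in>exponents 4 - A. smult (c e) (line_poly e p x)) + (\<Sum>e\<in>A. smult (c e) (line_poly e p x))"
      by (rule sum.subset_diff) (auto simp: A_def)
    ultimately show "[:0, 1:] ^ 3 dvd (\<Sum>e\<in>exponents 4. smult (c e) (line_poly e p x))"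
      by (simp add: dvd_add)
  qed
  then show ?thesis using \<open>p \<noteq> 0\<close> unfolding has_triple_point_def by blast
qed

lemma monomial_lower_coord:
  assumes "1 \<le> e \<gamma>" shows "monomial e x = x$\<gamma> * monomial (e(\<gamma> := e \<gamma> - 1)) x"
proof -
  have "monomial e x = (\<Prod>i\<in>UNIV. x$i ^ (e(\<gamma> := e \<gamma> - 1)) i * (if i = \<gamma> then x$i else 1))"
    unfolding monomial_def using assms by (intro prod.cong refl) (simp add: power_eq_if)
  then show ?thesis by (simp add: prod.distrib monomial_def prod.If_cases)
qed

lemma homogeneous_factor_coord:
  assumes F: "\<forall>x. F x = (\<Sum>e\<in>exponents d. c e * monomial e x)" and d3: "distinct [\<alpha>, \<beta>, \<gamma>]"
    and div: "\<And>e. e \<in> exponents d \<Longrightarrow> c e \<noteq> 0 \<Longrightarrow> 1 \<le> e \<gamma>"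
  defines "C \<equiv> \<lambda>x. \<Sum>e\<in>exponents d. c e * (if 1 \<le> e \<gamma> then monomial (e(\<gamma> := e \<gamma> - 1)) x else 0)"
  shows "homogeneous (d - 1) C" and "F x = x$\<gamma> * C x"
proof -
  have lower: "e(\<gamma> := e \<gamma> - 1) \<in> exponents (d - 1)" if "e \<in> exponents d" "1 \<le> e \<gamma>" for e
    using that distinct_3_neq[OF d3] unfolding exponents_distinct_3[OF d3] by auto
  show "homogeneous (d - 1) C" unfolding C_def
  proof (intro homogeneous_sum homogeneous_cmult)
    fix e assume "e \<in> exponents d"
    then show "homogeneous (d - 1) (\<lambda>x. if 1 \<le> e \<gamma> then monomial (e(\<gamma> := e \<gamma> - 1)) x else 0)"
      using lower homogeneous_monomial homogeneous_zero by (cases "1 \<le> e \<gamma>") simp_all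
  qed simp
  have "c e * monomial e x = x$\<gamma> * (c e * (if 1 \<le> e \<gamma> then monomial (e(\<gamma> := e \<gamma> - 1)) x else 0))"
    if "e \<in> exponents d" for e
    using div[OF that] monomial_lower_coord[of e \<gamma> x] by (cases "c e = 0") auto
  then show "F x = x$\<gamma> * C x" unfolding F[rule_format] C_def sum_distrib_left by (rule sum.cong[OF refl])
qed

lemma coeff_line_poly_axes:
  assumes d3: "distinct [\<alpha>, \<beta>, \<gamma>]"
  shows "coeff (\<Sum>e\<in>exponents 4. smult (c e) (line_poly e (axis \<alpha> 1) (axis \<gamma> 1))) 2
           = c (exponent3 \<alpha> \<beta> \<gamma> 2 0 2)"
proof -
  have "coeff (line_poly e (axis \<alpha> 1) (axis \<gamma> 1)) 2 = (if e = exponent3 \<alpha> \<beta> \<gamma> 2 0 2 then 1 else 0)"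
    if "e \<in> exponents 4" for e
  proof -
    have "line_poly e (axis \<alpha> 1) (axis \<gamma> 1) = (if e \<beta> = 0 then monom 1 (e \<gamma>) else 0)"
      using distinct_3_neq[OF d3]
      by (simp add: line_poly_distinct_3[OF d3] axis_def power_0_left monom_altdef one_pCons[symmetric])
    moreover have "e \<beta> = 0 \<and> e \<gamma> = 2 \<longleftrightarrow> e = exponent3 \<alpha> \<beta> \<gamma> 2 0 2"
      using that unfolding exponent3_eq_iff[OF d3] exponents_distinct_3[OF d3] by arith
    ultimately show ?thesis by (auto simp: coeff_monom)
  qed
  then have "coeff (\<Sum>e\<in>exponents 4. smult (c e) (line_poly e (axis \<alpha> 1) (axis \<gamma> 1))) 2
      = (\<Sum>e\<in>exponents 4. if e = exponent3 \<alpha> \<beta> \<gamma> 2 0 2 then c e else 0)"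
    unfolding coeff_sum by (intro sum.cong refl) simp
  then show ?thesis using exponent3_in_exponents[OF d3, of 2 0 2] by simp
qed

text \<open>A singular point of \<open>C\<close> at \<open>[e\<^sub>\<alpha>]\<close> would make \<open>F = x\<^sub>\<gamma> C\<close> vanish to order three along
  the line towards \<open>[e\<^sub>\<gamma>]\<close>, killing the coefficient of \<open>x\<^sub>\<alpha>\<^sup>2x\<^sub>\<gamma>\<^sup>2\<close>.\<close>
lemma cofactor_nonsingular_at_axis:
  assumes F: "\<forall>x. F x = (\<Sum>e\<in>exponents 4. c e * monomial e x)" and d3: "distinct [\<alpha>, \<beta>, \<gamma>]"
    and FC: "\<And>x. F x = x$\<gamma> * C x" and c202: "c (exponent3 \<alpha> \<beta> \<gamma> 2 0 2) \<noteq> 0"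
  shows "\<not> mult_ge C (axis \<alpha> 1) 2"
proof
  assume "mult_ge C (axis \<alpha> 1) 2"
  then obtain q where q: "\<And>\<tau>. C (axis \<alpha> 1 + cvec \<tau> (axis \<gamma> 1)) = \<tau> ^ 2 * poly q \<tau>"
    unfolding mult_ge_def by blast
  define P where "P = (\<Sum>e\<in>exponents 4. smult (c e) (line_poly e (axis \<alpha> 1) (axis \<gamma> 1)))"
  have "poly P \<tau> = poly (pCons 0 (pCons 0 (pCons 0 q))) \<tau>" for \<tau>
    using form_on_line[OF F, of "axis \<alpha> 1" \<tau> "axis \<gamma> 1"] FC q[of \<tau>] distinct_3_neq[OF d3]
    by (simp add: P_def cvec_def axis_def power2_eq_square mult.assoc)
  then have "P = pCons 0 (pCons 0 (pCons 0 q))" by (simp add: poly_eq_poly_eq_iff[symmetric] fun_eq_iff)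
  then have "coeff P 2 = 0" by (simp add: numeral_2_eq_2)
  then show False using c202 coeff_line_poly_axes[OF d3, of c] by (simp add: P_def)
qed

lemma cubic_plus_inflectional_line_if_support:
  assumes F: "\<forall>x. F x = (\<Sum>e\<in>exponents 4. c e * monomial e x)" and d3: "distinct [\<alpha>, \<beta>, \<gamma>]"
    and div: "\<And>e. e \<in> exponents 4 \<Longrightarrow> c e \<noteq> 0 \<Longrightarrow> 1 \<le> e \<gamma>"
    and tangent: "\<And>e. e \<in> exponents 4 \<Longrightarrow> c e \<noteq> 0 \<Longrightarrow> e \<gamma> = 1 \<Longrightarrow> e = exponent3 \<alpha> \<beta> \<gamma> 0 3 1"
    and c202: "c (exponent3 \<alpha> \<beta> \<gamma> 2 0 2) \<noteq> 0" and c031: "c (exponent3 \<alpha> \<beta> \<gamma> 0 3 1) \<noteq> 0"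
  shows "cubic_plus_inflectional_line F"
proof -
  note ne = distinct_3_neq[OF d3]
  define C where "C x = (\<Sum>e\<in>exponents 4. c e * (if 1 \<le> e \<gamma> then monomial (e(\<gamma> := e \<gamma> - 1)) x else 0))" for x
  have "homogeneous (4 - 1) C \<and> (\<forall>x. F x = x$\<gamma> * C x)"
    unfolding C_def[abs_def] by (intro conjI allI homogeneous_factor_coord[OF F d3] div)
  then have C3: "homogeneous 3 C" and FC: "F x = x$\<gamma> * C x" for x by simp_all
  have C_line: "C (cvec s (axis \<alpha> 1) + cvec t (axis \<beta> 1)) = c (exponent3 \<alpha> \<beta> \<gamma> 0 3 1) * t ^ 3" for s t
  proof -
    define y where "y = cvec s (axis \<alpha> 1) + cvec t (axis \<beta> 1)"
    have y: "y$\<alpha> = s" "y$\<beta> = t" "y$\<gamma> = 0" using ne by (simp_all add: y_def cvec_def axis_def)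
    have "c e * (if 1 \<le> e \<gamma> then monomial (e(\<gamma> := e \<gamma> - 1)) y else 0)
        = (if e = exponent3 \<alpha> \<beta> \<gamma> 0 3 1 then c e * t ^ 3 else 0)" if "e \<in> exponents 4" for e
      using that tangent[OF that] div[OF that] ne y
      by (cases "c e = 0"; cases "e \<gamma> = 1") (auto simp: monomial_distinct_3[OF d3] exponent3_def)
    then have "C y = (\<Sum>e\<in>exponents 4. if e = exponent3 \<alpha> \<beta> \<gamma> 0 3 1 then c e * t ^ 3 else 0)"
      unfolding C_def by (rule sum.cong[OF refl])
    then show ?thesis using exponent3_in_exponents[OF d3, of 0 3 1] by (simp add: y_def)
  qed
  have smooth: "\<not> mult_ge C (axis \<alpha> 1) 2"
    by (rule cofactor_nonsingular_at_axis[OF F d3 FC c202])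
  have indep: "\<forall>s t. cvec s (axis \<alpha> 1) + cvec t (axis \<beta> 1) = 0 \<longrightarrow> s = 0 \<and> t = 0"
    using ne by (auto simp: vec_eq_iff cvec_def axis_def dest: spec[of _ \<alpha>] spec[of _ \<beta>])
  have "inflectional_tangent (\<lambda>x. x$\<gamma>) C"
    unfolding inflectional_tangent_def
    by (rule exI[of _ "axis \<alpha> 1"], rule exI[of _ "axis \<beta> 1"])
      (use C_line smooth indep c031 ne in \<open>auto simp: axis_def\<close>)
  moreover have "(\<lambda>x. x$\<gamma>) \<noteq> (\<lambda>_. 0 :: complex)" by (metis axis_nth zero_neq_one)
  ultimately show ?thesis
    unfolding cubic_plus_inflectional_line_def ternary_form_iff_homogeneous
    using C3 FC homogeneous_coord by blast
qed

lemma exists_sorted_3: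
  fixes t :: "3 \<Rightarrow> 'a::linorder" shows "\<exists>\<alpha> \<beta> \<gamma>. distinct [\<alpha>, \<beta>, \<gamma>] \<and> t \<beta> \<le> t \<alpha> \<and> t \<gamma> \<le> t \<beta>"
proof -
  have "distinct [1::3, 2, 3]" "distinct [1::3, 3, 2]" "distinct [2::3, 1, 3]"
    "distinct [2::3, 3, 1]" "distinct [3::3, 1, 2]" "distinct [3::3, 2, 1]" by simp_all
  then show ?thesis
    by (cases "t 2 \<le> t 1"; cases "t 3 \<le> t 2"; cases "t 3 \<le> t 1") (meson le_cases order_trans)+
qed

text \<open>Order the weights \<open>u\<^sub>\<alpha> \<ge> u\<^sub>\<beta> \<ge> u\<^sub>\<gamma>\<close>. Either no monomial contains \<open>x\<^sub>\<alpha>\<^sup>2\<close>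
  (triple point at \<open>[e\<^sub>\<alpha>]\<close>), or \<open>x\<^sub>\<alpha>\<^sup>2x\<^sub>\<gamma>\<^sup>2\<close> occurs, which forces \<open>u\<^sub>\<beta> > 0\<close> and leaves
  only monomials divisible by \<open>x\<^sub>\<gamma>\<close>, with \<open>x\<^sub>\<beta>\<^sup>3x\<^sub>\<gamma>\<close> the only one of \<open>x\<^sub>\<gamma>\<close>-degree one.\<close>
lemma triple_point_or_flex_if_sorted_weights:
  assumes F: "\<forall>x. F x = (\<Sum>e\<in>exponents 4. c e * monomial e x)" and d3: "distinct [\<alpha>, \<beta>, \<gamma>]"
    and u: "u \<beta> \<le> u \<alpha>" "u \<gamma> \<le> u \<beta>" "u \<alpha> + u \<beta> + u \<gamma> = 0"
    and neg: "\<And>e. e \<in> exponents 4 \<Longrightarrow> c e \<noteq> 0 \<Longrightarrow> e \<alpha> * u \<alpha> + e \<beta> * u \<beta> + e \<gamma> * u \<gamma> < (0::real)"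
  shows "has_triple_point F \<or> cubic_plus_inflectional_line F"
proof (cases "\<forall>e\<in>exponents 4. c e \<noteq> 0 \<longrightarrow> e \<alpha> \<le> 1")
  case True
  then show ?thesis using triple_point_if_coord_degree_le_1[OF F d3] by blast
next
  case False
  have sum4: "e \<alpha> + e \<beta> + e \<gamma> = 4" if "e \<in> exponents 4" for e
    using that exponents_distinct_3[OF d3] by blast
  obtain e0 where e0: "e0 \<in> exponents 4" "c e0 \<noteq> 0" "\<not> e0 \<alpha> \<le> 1" using False by blast
  then have "e0 = exponent3 \<alpha> \<beta> \<gamma> 2 0 2" and "0 < u \<beta>"
    using negative_weight_exponents[OF sum4[OF e0(1)] u neg[OF e0(1,2)]] exponent3_eq_iff[OF d3] by blast+
  then have c202: "c (exponent3 \<alpha> \<beta> \<gamma> 2 0 2) \<noteq> 0" using e0 by simp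
  have supp: "(e \<alpha> \<le> 1 \<or> e \<alpha> = 2 \<and> e \<beta> = 0 \<and> e \<gamma> = 2)
      \<and> \<not> (e \<alpha> = 1 \<and> e \<beta> = 3) \<and> \<not> (e \<alpha> = 1 \<and> e \<beta> = 2 \<and> e \<gamma> = 1) \<and> e \<beta> \<noteq> 4"
    if "e \<in> exponents 4" "c e \<noteq> 0" for e
    using negative_weight_exponents[OF sum4[OF that(1)] u neg[OF that]]
      negative_weight_exponents_excluded[OF sum4[OF that(1)] u neg[OF that] \<open>0 < u \<beta>\<close>] by blast
  have div: "1 \<le> e \<gamma>" if "e \<in> exponents 4" "c e \<noteq> 0" for e
    using supp[OF that] sum4[OF that(1)] by arith
  have tangent: "e = exponent3 \<alpha> \<beta> \<gamma> 0 3 1" if "e \<in> exponents 4" "c e \<noteq> 0" "e \<gamma> = 1" for e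
    using supp[OF that(1,2)] sum4[OF that(1)] that(3) exponent3_eq_iff[OF d3] by auto
  show ?thesis
  proof (cases "c (exponent3 \<alpha> \<beta> \<gamma> 0 3 1) = 0")
    case True
    then have "2 \<le> e \<gamma>" if "e \<in> exponents 4" "c e \<noteq> 0" for e
      using div[OF that] tangent[OF that] that(2) by (cases "e \<gamma> = 1") auto
    then show ?thesis using triple_point_if_coord_square_divides[OF F d3] by blast
  next
    case False
    have "cubic_plus_inflectional_line F"
      by (rule cubic_plus_inflectional_line_if_support[OF F d3]) (use div tangent c202 False in blast)+
    then show ?thesis ..
  qed
qed

lemma triple_point_or_flex_if_negative_weights:
  assumes F: "\<forall>x. F x = (\<Sum>e\<in>exponents 4. c e * monomial e x)" and "sum u UNIV = (0::real)"
    and neg: "\<And>e. e \<in> exponents 4 \<Longrightarrow> c e \<noteq> 0 \<Longrightarrow> (\<Sum>i\<in>UNIV. e i * u i) < 0"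
  shows "has_triple_point F \<or> cubic_plus_inflectional_line F"
proof -
  obtain \<alpha> \<beta> \<gamma> where d3: "distinct [\<alpha>, \<beta>, \<gamma>]" and "u \<beta> \<le> u \<alpha>" "u \<gamma> \<le> u \<beta>"
    using exists_sorted_3[of u] by blast
  moreover have "u \<alpha> + u \<beta> + u \<gamma> = 0" using assms(2) sum_UNIV_distinct_3[OF d3, of u] by simp
  moreover have "e \<alpha> * u \<alpha> + e \<beta> * u \<beta> + e \<gamma> * u \<gamma> < 0" if "e \<in> exponents 4" "c e \<noteq> 0" for e
    using neg[OF that] sum_UNIV_distinct_3[OF d3, of "\<lambda>i. e i * u i"] by simp
  ultimately show ?thesis using triple_point_or_flex_if_sorted_weights[OF F] by blast
qed

section \<open>Invariance under linear changes of coordinates\<close>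

lemma cvec_eq_scalar_mult: "cvec t v = t *s v"
  unfolding cvec_def by (simp add: vec_eq_iff)

lemma matrix_vector_mult_cvec: "M *v (p + cvec t x) = M *v p + cvec t (M *v x)"
  by (simp add: cvec_eq_scalar_mult matrix_vector_right_distrib vector_scalar_commute)

lemma mult_ge_compose_linear:
  assumes "mult_ge f (M *v p) m" shows "mult_ge (\<lambda>x. f (M *v x)) p m"
  using assms unfolding mult_ge_def matrix_vector_mult_cvec by blast

lemma mult_ge_of_compose_linear:
  assumes "mult_ge (\<lambda>x. f (M *v x)) p m" and inv: "M ** Mi = mat 1"
  shows "mult_ge f (M *v p) m"
  unfolding mult_ge_def
proof
  fix x
  obtain q where "\<forall>t. f (M *v (p + cvec t (Mi *v x))) = t ^ m * poly q t"
    using assms unfolding mult_ge_def by blast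
  then show "\<exists>q. \<forall>t. f (M *v p + cvec t x) = t ^ m * poly q t"
    by (auto simp: matrix_vector_mult_cvec matrix_vector_mul_assoc inv)
qed

lemma has_triple_point_of_compose_linear:
  assumes "invertible K" "has_triple_point (\<lambda>x. F (K *v x))" shows "has_triple_point F"
proof -
  obtain Ki where KKi: "K ** Ki = mat 1" and KiK: "Ki ** K = mat 1" using assms(1) unfolding invertible_def by blast
  obtain p where "p \<noteq> 0" and mp: "mult_ge (\<lambda>x. F (K *v x)) p 3"
    using assms(2) unfolding has_triple_point_def by blast
  moreover have "K *v p \<noteq> 0"
    using \<open>p \<noteq> 0\<close> by (metis KiK matrix_vector_mul_assoc matrix_vector_mul_lid matrix_vector_mult_0_right)
  ultimately show ?thesis unfolding has_triple_point_def using mult_ge_of_compose_linear[OF mp KKi] by blast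
qed

lemma inflectional_tangent_of_compose_linear:
  assumes KiK: "Ki ** K = mat 1" and "inflectional_tangent L C"
  shows "inflectional_tangent (\<lambda>y. L (Ki *v y)) (\<lambda>y. C (Ki *v y))"
proof -
  obtain p q a where ind: "\<forall>s t. cvec s p + cvec t q = 0 \<longrightarrow> s = 0 \<and> t = 0" and "L p = 0" "L q = 0"
    and "a \<noteq> 0" and C: "\<forall>s t. C (cvec s p + cvec t q) = a * t ^ 3" and sing: "\<not> mult_ge C p 2"
    using assms(2) unfolding inflectional_tangent_def by blast
  have inv: "Ki *v (K *v v) = v" for v by (simp add: matrix_vector_mul_assoc KiK)
  have lin: "Ki *v (cvec s (K *v p) + cvec t (K *v q)) = cvec s p + cvec t q" for s t
    by (simp add: cvec_eq_scalar_mult matrix_vector_right_distrib vector_scalar_commute inv)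
  have "\<not> mult_ge (\<lambda>y. C (Ki *v y)) (K *v p) 2"
  proof
    assume "mult_ge (\<lambda>y. C (Ki *v y)) (K *v p) 2"
    then have "mult_ge (\<lambda>x. C (Ki *v (K *v x))) p 2" by (rule mult_ge_compose_linear)
    then show False using sing by (simp add: inv)
  qed
  moreover have "cvec s (K *v p) + cvec t (K *v q) = 0 \<Longrightarrow> s = 0 \<and> t = 0" for s t
    using ind lin[of s t] by (metis matrix_vector_mult_0_right)
  ultimately show ?thesis unfolding inflectional_tangent_def
    using \<open>L p = 0\<close> \<open>L q = 0\<close> \<open>a \<noteq> 0\<close> C by (intro exI[of _ "K *v p"] exI[of _ "K *v q"] exI[of _ a]) (simp add: lin inv)
qed

lemma cubic_plus_inflectional_line_of_compose_linear:
  assumes "invertible K" "cubic_plus_inflectional_line (\<lambda>x. F (K *v x))"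
  shows "cubic_plus_inflectional_line F"
proof -
  obtain Ki where KKi: "K ** Ki = mat 1" and KiK: "Ki ** K = mat 1" using assms(1) unfolding invertible_def by blast
  obtain L C where "ternary_form 1 L" "L \<noteq> (\<lambda>_. 0)" "ternary_form 3 C"
    and FLC: "\<forall>x. F (K *v x) = L x * C x" and "inflectional_tangent L C"
    using assms(2) unfolding cubic_plus_inflectional_line_def by blast
  moreover have "L \<noteq> (\<lambda>_. 0) \<Longrightarrow> (\<lambda>y. L (Ki *v y)) \<noteq> (\<lambda>_. 0)"
    by (metis KiK matrix_vector_mul_assoc matrix_vector_mul_lid)
  moreover have "F y = L (Ki *v y) * C (Ki *v y)" for y
    using FLC[rule_format, of "Ki *v y"] by (simp add: matrix_vector_mul_assoc KKi)
  ultimately show ?thesis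
    unfolding cubic_plus_inflectional_line_def ternary_form_iff_homogeneous
    using homogeneous_compose_linear inflectional_tangent_of_compose_linear[OF KiK] by blast
qed

theorem unstable_quartic_triple_point_or_flex:
  assumes "ternary_form 4 F" and "quartic_unstable F"
  shows "has_triple_point F \<or> cubic_plus_inflectional_line F"
proof -
  have F: "homogeneous 4 F" using assms(1) ternary_form_iff_homogeneous by blast
  obtain K u where "det K \<noteq> 0" "sum u UNIV = 0"
    and neg: "\<forall>e\<in>exponents 4. form_coeff 4 (\<lambda>x. F (K *v x)) e \<noteq> 0 \<longrightarrow> (\<Sum>i\<in>UNIV. real (e i) * u i) < 0"
    using unstable_imp_negative_weights[OF F assms(2)] by blast
  have "\<forall>x. F (K *v x) = (\<Sum>e\<in>exponents 4. form_coeff 4 (\<lambda>x. F (K *v x)) e * monomial e x)"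
    using homogeneous_eq_form_coeff[OF homogeneous_compose_linear[OF F]] by blast
  then have "has_triple_point (\<lambda>x. F (K *v x)) \<or> cubic_plus_inflectional_line (\<lambda>x. F (K *v x))"
    by (rule triple_point_or_flex_if_negative_weights[where u = u]) (use \<open>sum u UNIV = 0\<close> neg in auto)
  moreover have "invertible K" using \<open>det K \<noteq> 0\<close> invertible_det_nz by blast
  ultimately show ?thesis
    using has_triple_point_of_compose_linear cubic_plus_inflectional_line_of_compose_linear by blast
qed

section \<open>Double conics\<close>

lemma X_dvd_iff_poly_0: "[:0, 1:] dvd (P::complex poly) \<longleftrightarrow> poly P 0 = 0"
  using poly_eq_0_iff_dvd[of P 0] by simp

lemma X_dvd_if_X_dvd_square: "[:0, 1:] dvd (P::complex poly) ^ 2 \<Longrightarrow> [:0, 1:] dvd P"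
  by (simp add: X_dvd_iff_poly_0 poly_power)

lemma X_square_dvd_if_X_cube_dvd_square:
  fixes P :: "complex poly" assumes "[:0, 1:] ^ 3 dvd P ^ 2" shows "[:0, 1:] ^ 2 dvd P"
proof -
  have "[:0, 1:] dvd P ^ 2" using assms by (meson dvd_power dvd_trans zero_less_numeral)
  then obtain P1 where P1: "P = [:0, 1:] * P1" using X_dvd_if_X_dvd_square by (metis dvdE)
  have "[:0, 1:] ^ 2 * [:0, 1:] dvd [:0, 1:] ^ 2 * P1 ^ 2"
    using assms unfolding P1 by (simp add: power_mult_distrib power3_eq_cube power2_eq_square mult.assoc)
  then have "[:0, 1:] dvd P1 ^ 2" by (subst (asm) dvd_mult_cancel_left) simp
  then have "[:0, 1:] dvd P1" by (rule X_dvd_if_X_dvd_square)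
  then show ?thesis unfolding P1 power2_eq_square by (rule mult_dvd_mono[OF dvd_refl])
qed

lemma ternary_form_1_on_line: assumes "ternary_form 1 L" shows "L (u + cvec t v) = L u + t * L v"
proof -
  obtain c where "\<forall>x. L x = (\<Sum>a\<le>1. \<Sum>b\<le>1 - a. c a b * x$1 ^ a * x$2 ^ b * x$3 ^ (1 - a - b))"
    using assms unfolding ternary_form_def by blast
  then have "L x = c 0 0 * x$3 + c 0 1 * x$2 + c 1 0 * x$1" for x by simp
  then show ?thesis by (simp add: cvec_def algebra_simps)
qed

lemma square_no_triple_point_if_smooth:
  assumes Q: "ternary_form 2 Q" and "smooth_curve Q"
  shows "\<not> has_triple_point (\<lambda>x. (Q x)^2)"
proof
  assume "has_triple_point (\<lambda>x. (Q x)^2)"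
  then obtain p where "p \<noteq> 0" and mp: "mult_ge (\<lambda>x. (Q x)^2) p 3" unfolding has_triple_point_def by blast
  have "mult_ge Q p 2" unfolding mult_ge_def
  proof
    fix x
    obtain P where P: "\<forall>t. Q (p + cvec t x) = poly P t"
      using homogeneous_on_line Q ternary_form_iff_homogeneous by blast
    obtain q where "\<forall>t. (Q (p + cvec t x))^2 = t ^ 3 * poly q t" using mp unfolding mult_ge_def by blast
    then have "poly (P ^ 2) = poly ([:0, 1:] ^ 3 * q)" using P by (simp add: fun_eq_iff poly_power)
    then have "[:0, 1:] ^ 3 dvd P ^ 2" by (simp add: poly_eq_poly_eq_iff)
    then obtain r where "P = [:0, 1:] ^ 2 * r" by (elim X_square_dvd_if_X_cube_dvd_square[THEN dvdE])
    then show "\<exists>q. \<forall>t. Q (p + cvec t x) = t ^ 2 * poly q t" using P by (auto simp: poly_power)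
  qed
  then show False using assms(2) \<open>p \<noteq> 0\<close> unfolding smooth_curve_def by blast
qed

text \<open>A line component of \<open>Q\<^sup>2\<close> is a component of \<open>Q\<close>, hence of the residual cubic, which
  therefore cannot meet the line in a single point.\<close>
lemma square_not_cubic_plus_inflectional_line:
  assumes Q: "ternary_form 2 Q"
  shows "\<not> cubic_plus_inflectional_line (\<lambda>x. (Q x)^2)"
proof
  assume "cubic_plus_inflectional_line (\<lambda>x. (Q x)^2)"
  then obtain L C where L: "ternary_form 1 L" "L \<noteq> (\<lambda>_. 0)" and C: "ternary_form 3 C"
    and QLC: "\<forall>x. (Q x)^2 = L x * C x" and "inflectional_tangent L C"
    unfolding cubic_plus_inflectional_line_def by blast
  then obtain p q a where "L q = 0" "a \<noteq> 0" and Cst: "\<forall>s t. C (cvec s p + cvec t q) = a * t ^ 3"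
    unfolding inflectional_tangent_def by blast
  have "cvec 0 p + cvec 1 q = q" by (simp add: cvec_def vec_eq_iff)
  then have "C q = a" using Cst[rule_format, of 0 1] by simp
  obtain r where "L r \<noteq> 0" using L(2) by auto
  obtain P where P: "\<forall>t. Q (q + cvec t r) = poly P t"
    using homogeneous_on_line Q ternary_form_iff_homogeneous by blast
  obtain R where R: "\<forall>t. C (q + cvec t r) = poly R t"
    using homogeneous_on_line C ternary_form_iff_homogeneous by blast
  have "poly (P ^ 2) t = poly ([:0, 1:] * smult (L r) R) t" for t
  proof -
    have "(Q (q + cvec t r))^2 = (L q + t * L r) * C (q + cvec t r)"
      using QLC ternary_form_1_on_line[OF L(1)] by simp
    then show ?thesis using P R \<open>L q = 0\<close> by (simp add: poly_power algebra_simps)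
  qed
  then have "poly (P ^ 2) = poly ([:0, 1:] * smult (L r) R)" ..
  then have PR: "P ^ 2 = [:0, 1:] * smult (L r) R" by (simp add: poly_eq_poly_eq_iff)
  then have "[:0, 1:] dvd P ^ 2" by (metis dvd_triv_left)
  then have X_dvd: "[:0, 1:] dvd P" by (rule X_dvd_if_X_dvd_square)
  have "[:0, 1:] * [:0, 1:] dvd [:0, 1:] * smult (L r) R" unfolding PR[symmetric] power2_eq_square
    by (rule mult_dvd_mono[OF X_dvd X_dvd])
  then have "[:0, 1:] dvd smult (L r) R" by (subst (asm) dvd_mult_cancel_left) simp
  then have "poly R 0 = 0" using \<open>L r \<noteq> 0\<close> by (simp add: X_dvd_iff_poly_0)
  moreover have "q + cvec 0 r = q" by (simp add: cvec_def vec_eq_iff)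
  then have "poly R 0 = a" using R[rule_format, of 0] \<open>C q = a\<close> by simp
  ultimately show False using \<open>a \<noteq> 0\<close> by simp
qed

section \<open>From the net to its discriminant\<close>

lemma homogeneous_net_discriminant: "homogeneous 4 (net_discriminant A1 A2 A3)"
proof -
  have entry: "homogeneous 1 (\<lambda>x. (cmat (x$1) A1 + cmat (x$2) A2 + cmat (x$3) A3) $ i $ j)" for i j
    using homogeneous_linear[of "\<lambda>k. if k = 1 then A1$i$j else if k = 2 then A2$i$j else A3$i$j"]
    by (simp add: cmat_def sum_3 mult.commute)
  have "homogeneous (\<Sum>i\<in>(UNIV::4 set). 1)
          (\<lambda>x. \<Prod>i\<in>UNIV. (cmat (x$1) A1 + cmat (x$2) A2 + cmat (x$3) A3) $ i $ p i)" for p :: "4 \<Rightarrow> 4"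
    by (intro homogeneous_prod entry) simp
  then have "homogeneous 4 (\<lambda>x. \<Sum>p\<in>{p. p permutes (UNIV::4 set)}. of_int (sign p)
               * (\<Prod>i\<in>UNIV. (cmat (x$1) A1 + cmat (x$2) A2 + cmat (x$3) A3) $ i $ p i))"
    by (intro homogeneous_sum homogeneous_cmult) simp_all
  then show ?thesis unfolding net_discriminant_def[abs_def] det_def .
qed

definition entry :: "complex^4^4 \<Rightarrow> 4 \<times> 4 \<Rightarrow> complex" where
  "entry A e = A $ fst e $ snd e"

lemma plucker_entry: "plucker A1 A2 A3 e1 e2 e3 =
   entry A1 e1 * (entry A2 e2 * entry A3 e3 - entry A2 e3 * entry A3 e2)
 - entry A1 e2 * (entry A2 e1 * entry A3 e3 - entry A2 e3 * entry A3 e1)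
 + entry A1 e3 * (entry A2 e1 * entry A3 e2 - entry A2 e2 * entry A3 e1)"
  unfolding plucker_def entry_def Let_def by simp

lemma entry_cmat: "entry (cmat a A + cmat b B + cmat c C) f = a * entry A f + b * entry B f + c * entry C f"
  by (simp add: entry_def cmat_def)

lemma matrix_eq_iff_entry: "(A::complex^4^4) = B \<longleftrightarrow> (\<forall>f. entry A f = entry B f)"
  unfolding entry_def vec_eq_iff by auto

text \<open>If all maximal minors of the \<open>3 \<times> 10\<close> coefficient matrix vanish, its rows are dependent:
  a nonzero \<open>2 \<times> 2\<close> minor, expanded along a third column, gives the dependence.\<close>
lemma plucker_nonzero_if_independent:
  assumes indep: "\<forall>a b c. cmat a B1 + cmat b B2 + cmat c B3 = 0 \<longrightarrow> a = 0 \<and> b = 0 \<and> c = 0"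
  shows "\<exists>e1 e2 e3. plucker B1 B2 B3 e1 e2 e3 \<noteq> 0"
proof (rule ccontr)
  assume "\<not> ?thesis" then have Z: "\<And>e1 e2 e3. plucker B1 B2 B3 e1 e2 e3 = 0" by blast
  have dep: False if h: "\<forall>f. a * entry B1 f + b * entry B2 f + c * entry B3 f = 0"
    and nz: "\<not> (a = 0 \<and> b = 0 \<and> c = 0)" for a b c
  proof -
    have "cmat a B1 + cmat b B2 + cmat c B3 = 0"
      unfolding matrix_eq_iff_entry entry_cmat using h by (simp add: entry_def)
    then show False using indep nz by blast
  qed
  show False
  proof (cases "\<forall>f. entry B1 f = 0")
    case True then show False using dep[of 1 0 0] by simp
  next
    case False
    then obtain e1 where e1: "entry B1 e1 \<noteq> 0" by blast
    show False
    proof (cases "\<forall>f. entry B1 e1 * entry B2 f - entry B1 f * entry B2 e1 = 0")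
      case True
      then have "\<forall>f. (- entry B2 e1) * entry B1 f + entry B1 e1 * entry B2 f + 0 * entry B3 f = 0"
        by (simp add: algebra_simps)
      then show False using dep e1 by blast
    next
      case False
      then obtain e2 where e2: "entry B1 e1 * entry B2 e2 - entry B1 e2 * entry B2 e1 \<noteq> 0" by blast
      have "\<forall>f. (entry B2 e1 * entry B3 e2 - entry B2 e2 * entry B3 e1) * entry B1 f
              + (entry B1 e2 * entry B3 e1 - entry B1 e1 * entry B3 e2) * entry B2 f
              + (entry B1 e1 * entry B2 e2 - entry B1 e2 * entry B2 e1) * entry B3 f = 0"
        using Z[of e1 e2] unfolding plucker_entry by (simp add: algebra_simps)
      then show False using dep e2 by blast
    qed
  qed
qed

lemma quad_act_lin_comb:
  "cmat a (quad_act g A) + cmat b (quad_act g B) + cmat c (quad_act g C) = quad_act g (cmat a A + cmat b B + cmat c C)"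
proof -
  have right: "X ** cmat a Y = cmat a (X ** Y)" and left: "cmat a X ** Y = cmat a (X ** Y)"
    for a and X Y :: "complex^4^4"
    by (simp_all add: cmat_def matrix_matrix_mult_def vec_eq_iff sum_distrib_left mult_ac)
  have "(B + C) ** A = B ** A + C ** A" for A B C :: "complex^4^4"
    by (simp add: matrix_matrix_mult_def vec_eq_iff sum.distrib distrib_right)
  then show ?thesis unfolding quad_act_def by (simp add: matrix_add_ldistrib left right)
qed

lemma det_quad_act: "det g = 1 \<Longrightarrow> det (quad_act g M) = det M"
  unfolding quad_act_def by (simp add: det_mul det_transpose)

lemma quad_act_eq_0D: assumes "det g = 1" "quad_act g M = 0" shows "M = 0"
proof -
  have "invertible g" by (simp add: invertible_det_nz assms(1))
  then obtain gi where g1: "g ** gi = mat 1" unfolding invertible_def by blast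
  have "invertible (transpose g)" by (simp add: invertible_det_nz assms(1) det_transpose)
  then obtain ti where t1: "ti ** transpose g = mat 1" unfolding invertible_def by blast
  have "M = (ti ** transpose g) ** M ** (g ** gi)" by (simp add: t1 g1)
  also have "\<dots> = ti ** (quad_act g M) ** gi" unfolding quad_act_def by (simp add: matrix_mul_assoc)
  finally show ?thesis using assms(2) by simp
qed

lemma norm_det_le:
  fixes M :: "complex^'n^'n" assumes "\<And>i j. cmod (M$i$j) \<le> R"
  shows "cmod (det M) \<le> fact CARD('n) * R ^ CARD('n)"
proof -
  have "cmod (det M) \<le> (\<Sum>p\<in>{p. p permutes (UNIV::'n set)}. cmod (of_int (sign p) * (\<Prod>i\<in>UNIV. M$i$p i)))"
    unfolding det_def by (rule norm_sum)
  also have "\<dots> \<le> (\<Sum>p\<in>{p. p permutes (UNIV::'n set)}. R ^ CARD('n))"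
  proof (rule sum_mono)
    fix p
    have "cmod (of_int (sign p) * (\<Prod>i\<in>UNIV. M$i$p i)) = (\<Prod>i\<in>UNIV. cmod (M$i$p i))"
      by (simp add: norm_mult prod_norm[symmetric] sign_def)
    also have "\<dots> \<le> (\<Prod>i\<in>(UNIV::'n set). R)" by (intro prod_mono conjI norm_ge_zero assms)
    finally show "cmod (of_int (sign p) * (\<Prod>i\<in>UNIV. M$i$p i)) \<le> R ^ CARD('n)" by simp
  qed
  finally show ?thesis by (simp add: card_permutations)
qed

lemma net_discriminant_quad_act:
  "det g = 1 \<Longrightarrow> net_discriminant (quad_act g A1) (quad_act g A2) (quad_act g A3) = net_discriminant A1 A2 A3"
  unfolding net_discriminant_def by (simp add: quad_act_lin_comb det_quad_act)

lemma independent_quad_act: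
  assumes "det g = 1" and "\<forall>a b c. cmat a A1 + cmat b A2 + cmat c A3 = 0 \<longrightarrow> a = 0 \<and> b = 0 \<and> c = 0"
  shows "\<forall>a b c. cmat a (quad_act g A1) + cmat b (quad_act g A2) + cmat c (quad_act g A3) = 0
           \<longrightarrow> a = 0 \<and> b = 0 \<and> c = 0"
  using assms quad_act_eq_0D unfolding quad_act_lin_comb by blast

text \<open>Cramer's rule for the \<open>3 \<times> 10\<close> coefficient matrix: every column of a member of the net is a
  combination of three fixed columns, with ratios of Plucker coordinates as coefficients.\<close>
lemma plucker_expansion:
  fixes a b c :: complex and B1 B2 B3 :: "complex^4^4"
  defines "M \<equiv> cmat a B1 + cmat b B2 + cmat c B3"
  shows "entry M f * plucker B1 B2 B3 e1 e2 e3 = entry M e1 * plucker B1 B2 B3 f e2 e3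
           + entry M e2 * plucker B1 B2 B3 e1 f e3 + entry M e3 * plucker B1 B2 B3 e1 e2 f"
  unfolding M_def entry_cmat plucker_entry by algebra

lemma complex_cube_root: "P \<noteq> 0 \<Longrightarrow> \<exists>\<mu>::complex. \<mu> ^ 3 = P \<and> cmod \<mu> = cmod P powr (1/3)"
  by (intro exI[of _ "exp (Ln P / 3)"])
    (simp add: exp_of_nat_mult[symmetric] norm_exp_eq_Re Re_Ln powr_def)

lemma norm_entry_le_pivot_entries:
  fixes a b c :: complex and B1 B2 B3 :: "complex^4^4"
  defines "M \<equiv> cmat a B1 + cmat b B2 + cmat c B3"
  assumes P0: "plucker B1 B2 B3 e1 e2 e3 \<noteq> 0"
    and max: "\<And>f1 f2 f3. cmod (plucker B1 B2 B3 f1 f2 f3) \<le> cmod (plucker B1 B2 B3 e1 e2 e3)"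
  shows "cmod (entry M f) \<le> cmod (entry M e1) + cmod (entry M e2) + cmod (entry M e3)"
proof -
  define P where "P = plucker B1 B2 B3 e1 e2 e3"
  have "entry M f * P = entry M e1 * plucker B1 B2 B3 f e2 e3
      + entry M e2 * plucker B1 B2 B3 e1 f e3 + entry M e3 * plucker B1 B2 B3 e1 e2 f"
    unfolding P_def M_def by (rule plucker_expansion)
  then have "cmod (entry M f) * cmod P = cmod (entry M e1 * plucker B1 B2 B3 f e2 e3
      + entry M e2 * plucker B1 B2 B3 e1 f e3 + entry M e3 * plucker B1 B2 B3 e1 e2 f)"
    by (simp only: norm_mult[symmetric])
  also have "\<dots> \<le> cmod (entry M e1 * plucker B1 B2 B3 f e2 e3)
      + cmod (entry M e2 * plucker B1 B2 B3 e1 f e3) + cmod (entry M e3 * plucker B1 B2 B3 e1 e2 f)"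
    by (rule order_trans[OF norm_triangle_ineq add_right_mono[OF norm_triangle_ineq]])
  also have "\<dots> \<le> (cmod (entry M e1) + cmod (entry M e2) + cmod (entry M e3)) * cmod P"
    unfolding norm_mult P_def distrib_right by (intro add_mono mult_left_mono max norm_ge_zero)
  finally have "cmod (entry M f) * cmod P \<le> (cmod (entry M e1) + cmod (entry M e2) + cmod (entry M e3)) * cmod P" .
  moreover have "0 < cmod P" using P0 by (simp add: P_def)
  ultimately show ?thesis by (rule mult_right_le_imp_le)
qed

text \<open>The substitution \<open>h\<close> sends \<open>y\<close> to the member of the net whose entries at the three pivot
  columns are \<open>\<mu> y\<close>, so all its entries are at most \<open>|\<mu>| \<parallel>y\<parallel>\<^sub>1\<close> in absolute value.\<close>
lemma net_discriminant_bound_by_max_plucker: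
  assumes P0: "plucker B1 B2 B3 e1 e2 e3 \<noteq> 0"
    and max: "\<And>f1 f2 f3. cmod (plucker B1 B2 B3 f1 f2 f3) \<le> cmod (plucker B1 B2 B3 e1 e2 e3)"
  shows "\<exists>h::complex^3^3. det h = 1 \<and> (\<forall>y. cmod (net_discriminant B1 B2 B3 (h *v y))
           \<le> fact 4 * (cmod (plucker B1 B2 B3 e1 e2 e3) powr (1/3) * (\<Sum>j\<in>UNIV. cmod (y$j))) ^ 4)"
proof -
  define P where "P = plucker B1 B2 B3 e1 e2 e3"
  define M where "M z = cmat (z$1) B1 + cmat (z$2) B2 + cmat (z$3) B3" for z :: "complex^3"
  define T :: "complex^3^3" where
    "T = (\<chi> i k. entry (if k = 1 then B1 else if k = 2 then B2 else B3) (if i = 1 then e1 else if i = 2 then e2 else e3))"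
  have T: "(T *v z)$1 = entry (M z) e1" "(T *v z)$2 = entry (M z) e2" "(T *v z)$3 = entry (M z) e3" for z
    by (simp_all add: T_def M_def entry_cmat matrix_vector_mult_def sum_3 mult.commute)
  have "det T = P" unfolding T_def P_def det_3 plucker_entry by (simp add: algebra_simps)
  then obtain Ti where TTi: "T ** Ti = mat 1" and dTi: "P * det Ti = 1"
    using P0 invertible_det_nz unfolding P_def invertible_def by (metis det_I det_mul)
  obtain \<mu> where \<mu>3: "\<mu> ^ 3 = P" and norm\<mu>: "cmod \<mu> = cmod P powr (1/3)"
    using complex_cube_root P0 unfolding P_def by blast
  define h where "h = (\<chi> i j. \<mu> * Ti$i$j)"
  have "det h = \<mu> ^ 3 * det Ti" unfolding h_def det_3 by (simp add: algebra_simps power3_eq_cube)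
  then have "det h = 1" using \<mu>3 dTi by simp
  moreover have "cmod (net_discriminant B1 B2 B3 (h *v y)) \<le> fact 4 * (cmod \<mu> * (\<Sum>j\<in>UNIV. cmod (y$j))) ^ 4" for y
  proof -
    have "h *v y = \<mu> *s (Ti *v y)"
      unfolding h_def by (simp add: vec_eq_iff matrix_vector_mult_def sum_distrib_left mult.assoc)
    then have "T *v (h *v y) = \<mu> *s y" by (simp add: vector_scalar_commute matrix_vector_mul_assoc TTi)
    then have "entry (M (h *v y)) e1 = \<mu> * y$1" "entry (M (h *v y)) e2 = \<mu> * y$2"
      "entry (M (h *v y)) e3 = \<mu> * y$3" using T[of "h *v y"] by simp_all
    then have "cmod (entry (M (h *v y)) (i, j)) \<le> cmod \<mu> * (\<Sum>j\<in>UNIV. cmod (y$j))" for i j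
      using norm_entry_le_pivot_entries[OF P0 max, of "(h *v y)$1" "(h *v y)$2" "(h *v y)$3" "(i, j)"]
      by (simp add: M_def norm_mult sum_3 algebra_simps)
    then have "cmod (M (h *v y) $ i $ j) \<le> cmod \<mu> * (\<Sum>j\<in>UNIV. cmod (y$j))" for i j
      by (simp add: entry_def)
    then show ?thesis
      unfolding net_discriminant_def M_def[symmetric] by (rule norm_det_le[where 'n = 4, simplified])
  qed
  ultimately show ?thesis unfolding P_def[symmetric] norm\<mu>[symmetric] by blast
qed

lemma net_discriminant_bound_by_plucker_bound:
  assumes indep: "\<forall>a b c. cmat a B1 + cmat b B2 + cmat c B3 = 0 \<longrightarrow> a = 0 \<and> b = 0 \<and> c = 0"
    and bound: "\<And>f1 f2 f3. cmod (plucker B1 B2 B3 f1 f2 f3) \<le> \<epsilon>"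
  shows "\<exists>h::complex^3^3. det h = 1 \<and> (\<forall>y. cmod (net_discriminant B1 B2 B3 (h *v y))
           \<le> fact 4 * (\<epsilon> powr (1/3) * (\<Sum>j\<in>UNIV. cmod (y$j))) ^ 4)"
proof -
  obtain E where max: "\<And>E'. cmod (plucker B1 B2 B3 (fst E') (fst (snd E')) (snd (snd E')))
      \<le> cmod (plucker B1 B2 B3 (fst E) (fst (snd E)) (snd (snd E)))"
    using finite_has_max_value[of "\<lambda>E. cmod (plucker B1 B2 B3 (fst E) (fst (snd E)) (snd (snd E)))"] by blast
  have max': "cmod (plucker B1 B2 B3 f1 f2 f3) \<le> cmod (plucker B1 B2 B3 (fst E) (fst (snd E)) (snd (snd E)))"
    for f1 f2 f3 using max[of "(f1, f2, f3)"] by simp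
  have P0: "plucker B1 B2 B3 (fst E) (fst (snd E)) (snd (snd E)) \<noteq> 0"
  proof
    assume "plucker B1 B2 B3 (fst E) (fst (snd E)) (snd (snd E)) = 0"
    then have "plucker B1 B2 B3 f1 f2 f3 = 0" for f1 f2 f3 using max'[of f1 f2 f3] by simp
    then show False using plucker_nonzero_if_independent[OF indep] by blast
  qed
  obtain h :: "complex^3^3" where "det h = 1" and hb: "\<And>y. cmod (net_discriminant B1 B2 B3 (h *v y))
      \<le> fact 4 * (cmod (plucker B1 B2 B3 (fst E) (fst (snd E)) (snd (snd E))) powr (1/3) * (\<Sum>j\<in>UNIV. cmod (y$j))) ^ 4"
    using net_discriminant_bound_by_max_plucker[OF P0 max'] by blast
  have "cmod (plucker B1 B2 B3 (fst E) (fst (snd E)) (snd (snd E))) powr (1/3) \<le> \<epsilon> powr (1/3)"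
    using bound by (intro powr_mono2) simp_all
  then have "fact 4 * (cmod (plucker B1 B2 B3 (fst E) (fst (snd E)) (snd (snd E))) powr (1/3) * (\<Sum>j\<in>UNIV. cmod (y$j))) ^ 4
      \<le> fact 4 * (\<epsilon> powr (1/3) * (\<Sum>j\<in>UNIV. cmod (y$j))) ^ 4" for y
    by (intro mult_left_mono power_mono mult_right_mono) (simp_all add: sum_nonneg)
  then have "cmod (net_discriminant B1 B2 B3 (h *v y)) \<le> fact 4 * (\<epsilon> powr (1/3) * (\<Sum>j\<in>UNIV. cmod (y$j))) ^ 4" for y
    using hb[of y] by (rule order_trans[rotated])
  then show ?thesis using \<open>det h = 1\<close> by blast
qed

theorem net_unstable_imp_discriminant_unstable:
  assumes net: "\<forall>a b c :: complex. cmat a A1 + cmat b A2 + cmat c A3 = 0 \<longrightarrow> a = 0 \<and> b = 0 \<and> c = 0"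
    and "net_unstable A1 A2 A3"
  shows "quartic_unstable (net_discriminant A1 A2 A3)"
proof -
  obtain g :: "nat \<Rightarrow> complex^4^4" where g1: "\<And>n. det (g n) = 1"
    and pl: "\<And>e1 e2 e3. (\<lambda>n. plucker (quad_act (g n) A1) (quad_act (g n) A2) (quad_act (g n) A3) e1 e2 e3)
               \<longlonglongrightarrow> 0"
    using assms(2) unfolding net_unstable_def by blast
  define \<epsilon> where "\<epsilon> n = (\<Sum>E\<in>UNIV. cmod (plucker (quad_act (g n) A1) (quad_act (g n) A2) (quad_act (g n) A3)
    (fst E) (fst (snd E)) (snd (snd E))))" for n
  have "\<exists>h::complex^3^3. det h = 1 \<and> (\<forall>y. cmod (net_discriminant A1 A2 A3 (h *v y))
      \<le> fact 4 * (\<epsilon> n powr (1/3) * (\<Sum>j\<in>UNIV. cmod (y$j))) ^ 4)" for n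
  proof -
    have "cmod (plucker (quad_act (g n) A1) (quad_act (g n) A2) (quad_act (g n) A3) f1 f2 f3) \<le> \<epsilon> n" for f1 f2 f3
      using member_le_sum[of "(f1, f2, f3)" UNIV "\<lambda>E. cmod (plucker (quad_act (g n) A1) (quad_act (g n) A2)
        (quad_act (g n) A3) (fst E) (fst (snd E)) (snd (snd E)))"] unfolding \<epsilon>_def by simp
    from net_discriminant_bound_by_plucker_bound[OF independent_quad_act[OF g1 net] this]
    show ?thesis unfolding net_discriminant_quad_act[OF g1] .
  qed
  then obtain h :: "nat \<Rightarrow> complex^3^3" where h1: "\<And>n. det (h n) = 1" and hb: "\<And>n y.
      cmod (net_discriminant A1 A2 A3 (h n *v y)) \<le> fact 4 * (\<epsilon> n powr (1/3) * (\<Sum>j\<in>UNIV. cmod (y$j))) ^ 4"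
    by metis
  have "\<epsilon> \<longlonglongrightarrow> 0" unfolding \<epsilon>_def by (intro tendsto_null_sum tendsto_norm_zero pl)
  then have root: "(\<lambda>n. \<epsilon> n powr (1/3)) \<longlonglongrightarrow> 0"
    by (rule tendsto_zero_powrI[OF _ tendsto_const]) (simp_all add: \<epsilon>_def sum_nonneg)
  have "(\<lambda>n. net_discriminant A1 A2 A3 (h n *v y)) \<longlonglongrightarrow> 0" for y
  proof (rule Lim_null_comparison)
    show "\<forall>\<^sub>F n in sequentially. norm (net_discriminant A1 A2 A3 (h n *v y))
        \<le> fact 4 * (\<epsilon> n powr (1/3) * (\<Sum>j\<in>UNIV. cmod (y$j))) ^ 4"
      using hb by simp
    have "(\<lambda>n. fact 4 * (\<epsilon> n powr (1/3) * (\<Sum>j\<in>UNIV. cmod (y$j))) ^ 4)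
        \<longlonglongrightarrow> fact 4 * (0 * (\<Sum>j\<in>UNIV. cmod (y$j))) ^ 4"
      using root by (intro tendsto_intros)
    then show "(\<lambda>n. fact 4 * (\<epsilon> n powr (1/3) * (\<Sum>j\<in>UNIV. cmod (y$j))) ^ 4) \<longlonglongrightarrow> 0"
      by simp
  qed
  then show ?thesis unfolding quartic_unstable_def using h1 by blast
qed

theorem corollaryA4:
  fixes A1 A2 A3 :: "complex^4^4"
  assumes sym: "transpose A1 = A1" "transpose A2 = A2" "transpose A3 = A3"
    and net: "\<forall>a b c :: complex. cmat a A1 + cmat b A2 + cmat c A3 = 0 \<longrightarrow> a = 0 \<and> b = 0 \<and> c = 0"
    and proper: "net_discriminant A1 A2 A3 \<noteq> (\<lambda>_. 0)"
  shows "(reduced_form 4 (net_discriminant A1 A2 A3) \<and> quartic_unstable (net_discriminant A1 A2 A3)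
            \<longrightarrow> has_triple_point (net_discriminant A1 A2 A3)
                \<or> cubic_plus_inflectional_line (net_discriminant A1 A2 A3))
       \<and> (quartic_unstable (net_discriminant A1 A2 A3) \<and> \<not> reduced_form 4 (net_discriminant A1 A2 A3)
            \<longrightarrow> \<not> double_smooth_conic (net_discriminant A1 A2 A3))
       \<and> (quartic_semistable (net_discriminant A1 A2 A3) \<longrightarrow> net_semistable A1 A2 A3)"
proof (intro conjI impI)
  have quartic: "ternary_form 4 (net_discriminant A1 A2 A3)"
    using homogeneous_net_discriminant ternary_form_iff_homogeneous by blast
  show "has_triple_point (net_discriminant A1 A2 A3) \<or> cubic_plus_inflectional_line (net_discriminant A1 A2 A3)"
    if "reduced_form 4 (net_discriminant A1 A2 A3) \<and> quartic_unstable (net_discriminant A1 A2 A3)"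
    using unstable_quartic_triple_point_or_flex[OF quartic] that by blast
  show "\<not> double_smooth_conic (net_discriminant A1 A2 A3)"
    if "quartic_unstable (net_discriminant A1 A2 A3) \<and> \<not> reduced_form 4 (net_discriminant A1 A2 A3)"
  proof
    assume "double_smooth_conic (net_discriminant A1 A2 A3)"
    then obtain Q where Q: "ternary_form 2 Q" "smooth_curve Q" and "\<forall>x. net_discriminant A1 A2 A3 x = (Q x)^2"
      unfolding double_smooth_conic_def by blast
    then have "net_discriminant A1 A2 A3 = (\<lambda>x. (Q x)^2)" by auto
    then show False
      using unstable_quartic_triple_point_or_flex[OF quartic] that
        square_no_triple_point_if_smooth[OF Q] square_not_cubic_plus_inflectional_line[OF Q(1)] by auto
  qed
  show "net_semistable A1 A2 A3" if "quartic_semistable (net_discriminant A1 A2 A3)"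
    using that net_unstable_imp_discriminant_unstable[OF net]
    unfolding quartic_semistable_def net_semistable_def by blast
qed

end
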